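(* Let $M/K$ be a finite Galois extension inside $\bar K$. Then $M/K$ is obtained by nontrivial strong cluster magnification from some subextension $L/K$ if and only if ${\rm Gal}(M/K)\cong A\times B$ for nontrivial groups $A$ and $B$ with $|A|>2$. If this happens, then $L/K$ is also Galois.
   Context: $K$ is a perfect field with a fixed algebraic closure $\bar K$; all extensions are finite and contained in $\bar K$. For a finite extension $L/K$, $\tilde L$ denotes its Galois closure in $\bar K$. Definition: $M/K$ is obtained by strong cluster magnification from a subextension $L/K$ (with $K\subseteq L\subseteq M$) if $[L:K]>2$, and there is a finite Galois extension $F/K$ with $\tilde L$ and $F$ linearly disjoint over $K$ and $LF=M$. The magnification is nontrivial if $F\neq K$. *)

theory Defs
  imports "HOL-Algebra.Algebraic_Closure" "HOL-Algebra.Bij" "HOL-Algebra.Generated_Fields"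
begin

text \<open>Ambient setting: R is an algebraic closure of the subfield K (locale algebraic_closure);
all extensions of K are subfields of R containing K.\<close>

definition perfect_subfield :: "('a, 'b) ring_scheme \<Rightarrow> 'a set \<Rightarrow> bool" where
  "perfect_subfield R K \<longleftrightarrow>
     (\<forall>p::nat. 1 < p \<and> [p] \<cdot>\<^bsub>R\<^esub> \<one>\<^bsub>R\<^esub> = \<zero>\<^bsub>R\<^esub>
        \<and> (\<forall>m. 0 < m \<and> m < p \<longrightarrow> [m] \<cdot>\<^bsub>R\<^esub> \<one>\<^bsub>R\<^esub> \<noteq> \<zero>\<^bsub>R\<^esub>)
        \<longrightarrow> (\<forall>x\<in>K. \<exists>y\<in>K. y [^]\<^bsub>R\<^esub> p = x))"

definition finite_ext :: "('a, 'b) ring_scheme \<Rightarrow> 'a set \<Rightarrow> 'a set \<Rightarrow> bool" where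
  "finite_ext R K L \<longleftrightarrow> subfield L R \<and> K \<subseteq> L \<and> ring.finite_dimension R K L"

definition degree_ext :: "('a, 'b) ring_scheme \<Rightarrow> 'a set \<Rightarrow> 'a set \<Rightarrow> nat" where
  "degree_ext R K L = ring.dim R K L"

definition Gal :: "('a, 'b) ring_scheme \<Rightarrow> 'a set \<Rightarrow> 'a set \<Rightarrow> ('a \<Rightarrow> 'a) monoid" where
  "Gal R K L = (BijGroup L)\<lparr>carrier :=
     {\<sigma> \<in> Bij L. \<sigma> \<in> ring_hom (R\<lparr>carrier := L\<rparr>) (R\<lparr>carrier := L\<rparr>) \<and> (\<forall>k\<in>K. \<sigma> k = k)}\<rparr>"

definition galois :: "('a, 'b) ring_scheme \<Rightarrow> 'a set \<Rightarrow> 'a set \<Rightarrow> bool" where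
  "galois R K L \<longleftrightarrow> finite_ext R K L \<and> card (carrier (Gal R K L)) = degree_ext R K L"

definition galois_closure :: "('a, 'b) ring_scheme \<Rightarrow> 'a set \<Rightarrow> 'a set \<Rightarrow> 'a set" where
  "galois_closure R K L = \<Inter> {N. galois R K N \<and> L \<subseteq> N}"

definition lin_disjoint :: "('a, 'b) ring_scheme \<Rightarrow> 'a set \<Rightarrow> 'a set \<Rightarrow> 'a set \<Rightarrow> bool" where
  "lin_disjoint R K A B \<longleftrightarrow>
     (\<forall>us. set us \<subseteq> A \<and> ring.independent R K us \<longrightarrow> ring.independent R B us)"

definition compositum :: "('a, 'b) ring_scheme \<Rightarrow> 'a set \<Rightarrow> 'a set \<Rightarrow> 'a set" where
  "compositum R L F = generate_field R (L \<union> F)"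

definition strong_cluster_magnification_via ::
  "('a, 'b) ring_scheme \<Rightarrow> 'a set \<Rightarrow> 'a set \<Rightarrow> 'a set \<Rightarrow> 'a set \<Rightarrow> bool" where
  "strong_cluster_magnification_via R K L M F \<longleftrightarrow>
     finite_ext R K L \<and> L \<subseteq> M \<and> degree_ext R K L > 2 \<and>
     galois R K F \<and> lin_disjoint R K (galois_closure R K L) F \<and> compositum R L F = M"

definition nontrivial_strong_cluster_magnification ::
  "('a, 'b) ring_scheme \<Rightarrow> 'a set \<Rightarrow> 'a set \<Rightarrow> 'a set \<Rightarrow> bool" where
  "nontrivial_strong_cluster_magnification R K L M \<longleftrightarrow>
     (\<exists>F. strong_cluster_magnification_via R K L M F \<and> F \<noteq> K)"

end

theory Submission
  imports Defs "HOL-Algebra.Elementary_Groups"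
begin

(* Everything rests on the Galois theory of finite extensions inside R, which follows from two
   classical bounds: Dedekind's lemma (there are at most [E:K] distinct K-embeddings of E into R) and
   Artin's lemma (a finite group H of automorphisms of M satisfies [M : M^H] <= |H|). Both, and the
   linear disjointness criterion, use the minimal-support argument: a nontrivial linear relation
   of minimal support, scaled to have a coefficient 1, is invariant under the automorphisms in play.
   For a Galois extension M/K they give |Gal(M/E)| = [M:E], the correspondence between subgroups and
   fixed fields, extension of embeddings, and the Galois property of Gal(M/K)-stable subfields.

   If M = LF with F/K Galois and the Galois closure T of L linearly disjoint from F, then
   [T:K] <= [M:F] = |Gal(M/F)| <= [L:K]: a K-basis of T stays F-independent, and restriction to L is
   injective on Gal(M/F). Hence T = L, and Gal(M/K) is the internal direct product of its normal
   subgroups Gal(M/F) and Gal(M/L), of orders [L:K] > 2 and [F:K] > 1. Conversely, from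
   Gal(M/K) = A x B take L and F to be the fixed fields of the factors B and A: both are Galois over K,
   [L:K] = |A|, they meet in K and are therefore linearly disjoint, and they generate M because
   Gal(M/LF) is trivial. *)

section \<open>Linear algebra over subfields\<close>

context field
begin

lemma finsum_in_subring:
  assumes "subring S R" and "f ` A \<subseteq> S"
  shows "(\<Oplus>i\<in>A. f i) \<in> S"
  using assms(2)
proof (induction A rule: infinite_finite_induct)
  case (insert a A)
  have "f ` insert a A \<subseteq> carrier R" using insert.prems subringE(1)[OF assms(1)] by blast
  then show ?case
    using insert subringE(7)[OF assms(1)] by (subst finsum_insert) (auto simp: image_subset_iff)
qed (use subringE(2)[OF assms(1)] in auto)

lemma finsum_diff:
  assumes "finite A" and "f \<in> A \<rightarrow> carrier R" and "g \<in> A \<rightarrow> carrier R"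
  shows "(\<Oplus>i\<in>A. f i \<ominus> g i) = (\<Oplus>i\<in>A. f i) \<ominus> (\<Oplus>i\<in>A. g i)"
proof -
  have "(\<Oplus>i\<in>A. f i \<ominus> g i) = (\<Oplus>i\<in>A. f i \<oplus> (\<ominus> \<one>) \<otimes> g i)"
    using assms by (intro finsum_cong') (auto simp: a_minus_def l_minus Pi_def)
  also have "\<dots> = (\<Oplus>i\<in>A. f i) \<oplus> (\<ominus> \<one>) \<otimes> (\<Oplus>i\<in>A. g i)"
    using assms by (simp add: finsum_addf finsum_rdistr Pi_def)
  finally show ?thesis using assms by (simp add: a_minus_def l_minus)
qed

lemma finsum_smult_left:
  assumes "finite A" and "c \<in> carrier R" and "f \<in> A \<rightarrow> carrier R" and "g \<in> A \<rightarrow> carrier R"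
  shows "(\<Oplus>i\<in>A. c \<otimes> f i \<otimes> g i) = c \<otimes> (\<Oplus>i\<in>A. f i \<otimes> g i)"
proof -
  have "(\<Oplus>i\<in>A. c \<otimes> f i \<otimes> g i) = (\<Oplus>i\<in>A. c \<otimes> (f i \<otimes> g i))"
    using assms by (intro finsum_cong') (auto simp: m_assoc Pi_def)
  also have "\<dots> = c \<otimes> (\<Oplus>i\<in>A. f i \<otimes> g i)"
    using assms by (intro finsum_rdistr[symmetric]) auto
  finally show ?thesis .
qed

lemma finsum_diff_mult:
  assumes "finite A" and "f \<in> A \<rightarrow> carrier R" and "g \<in> A \<rightarrow> carrier R" and "h \<in> A \<rightarrow> carrier R"
  shows "(\<Oplus>i\<in>A. (f i \<ominus> g i) \<otimes> h i) = (\<Oplus>i\<in>A. f i \<otimes> h i) \<ominus> (\<Oplus>i\<in>A. g i \<otimes> h i)"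
proof -
  have "(\<Oplus>i\<in>A. (f i \<ominus> g i) \<otimes> h i) = (\<Oplus>i\<in>A. f i \<otimes> h i \<ominus> g i \<otimes> h i)"
    using assms by (intro finsum_cong') (auto simp: a_minus_def l_distr l_minus Pi_def)
  also have "\<dots> = (\<Oplus>i\<in>A. f i \<otimes> h i) \<ominus> (\<Oplus>i\<in>A. g i \<otimes> h i)"
    using assms by (intro finsum_diff) auto
  finally show ?thesis .
qed

lemma homogeneous_system_pivot:
  assumes S: "subfield S R" and J: "finite J" "j0 \<notin> J"
    and a: "\<And>r j. r \<in> insert i I \<Longrightarrow> j \<in> insert j0 J \<Longrightarrow> a r j \<in> S" and p: "a i j0 \<noteq> \<zero>"
    and y: "\<And>j. j \<in> J \<Longrightarrow> y j \<in> S"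
    and sol: "\<And>r. r \<in> I \<Longrightarrow> (\<Oplus>j\<in>J. (a r j \<ominus> a r j0 \<otimes> inv (a i j0) \<otimes> a i j) \<otimes> y j) = \<zero>"
    and r: "r \<in> insert i I"
  shows "(\<Oplus>j\<in>insert j0 J. a r j \<otimes> (y(j0 := \<ominus> (inv (a i j0) \<otimes> (\<Oplus>j\<in>J. a i j \<otimes> y j)))) j) = \<zero>"
proof -
  note SR = subfieldE(3)[OF S]
  define s where "s r = (\<Oplus>j\<in>J. a r j \<otimes> y j)" for r
  have aC: "a r j \<in> carrier R" if "r \<in> insert i I" "j \<in> insert j0 J" for r j using a that SR by blast
  have yC: "y j \<in> carrier R" if "j \<in> J" for j using y that SR by blast
  have ipC: "inv (a i j0) \<in> carrier R" using subfield_m_inv(1)[OF S] a p SR by blast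
  have sC: "s r \<in> carrier R" if "r \<in> insert i I" for r
    unfolding s_def using aC[OF that] yC by (intro finsum_closed) auto
  have "(\<Oplus>j\<in>J. a r j \<otimes> (y(j0 := \<ominus> (inv (a i j0) \<otimes> s i))) j) = s r"
    unfolding s_def using J(2) aC[OF r] yC by (intro finsum_cong') auto
  then have row: "(\<Oplus>j\<in>insert j0 J. a r j \<otimes> (y(j0 := \<ominus> (inv (a i j0) \<otimes> s i))) j)
      = a r j0 \<otimes> \<ominus> (inv (a i j0) \<otimes> s i) \<oplus> s r"
    using J aC[OF r] yC ipC sC by (subst finsum_insert) auto
  show ?thesis
  proof (cases "r = i")
    case True
    have "a i j0 \<otimes> inv (a i j0) = \<one>" using p aC[of i j0] by (simp add: field_Units)
    then show ?thesis
      using row True aC[of i j0] ipC sC by (simp add: s_def r_minus m_assoc[symmetric] l_neg)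
  next
    case False
    then have rI: "r \<in> I" using r by simp
    have "\<zero> = (\<Oplus>j\<in>J. a r j \<otimes> y j \<ominus> (a r j0 \<otimes> inv (a i j0)) \<otimes> (a i j \<otimes> y j))"
      unfolding sol[OF rI, symmetric]
      using aC r ipC yC by (intro finsum_cong') (auto simp: m_assoc a_minus_def l_distr l_minus)
    also have "\<dots> = s r \<ominus> (a r j0 \<otimes> inv (a i j0)) \<otimes> s i"
      unfolding s_def using aC r ipC yC J(1) by (subst finsum_diff) (auto simp: finsum_rdistr Pi_def)
    finally show ?thesis
      using row aC[OF r, of j0] ipC sC[OF r] sC[of i]
      by (simp add: s_def r_minus m_assoc a_minus_def a_comm)
  qed
qed

lemma homogeneous_system_nontrivial_solution:
  assumes S: "subfield S R" and I: "finite I" and J: "finite J" and IJ: "card I < card J"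
    and a: "\<And>i j. i \<in> I \<Longrightarrow> j \<in> J \<Longrightarrow> a i j \<in> S"
  obtains x where "\<And>j. j \<in> J \<Longrightarrow> x j \<in> S" and "\<exists>j\<in>J. x j \<noteq> \<zero>"
    and "\<And>i. i \<in> I \<Longrightarrow> (\<Oplus>j\<in>J. a i j \<otimes> x j) = \<zero>"
  using I J IJ a
proof (induction I arbitrary: J a thesis rule: finite_induct)
  case empty
  then show ?case
    using subringE(3)[OF subfieldE(1)[OF S]] by (intro empty.prems(1)[of "\<lambda>_. \<one>"]) (auto simp: card_gt_0_iff)
next
  case (insert i I)
  note thesisI = insert.prems(1) and finJ = insert.prems(2) and card = insert.prems(3)
    and aS = insert.prems(4)
  note SR = subfieldE(3)[OF S] and Sp = subringE[OF subfieldE(1)[OF S]]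
  show ?case
  proof (cases "\<forall>j\<in>J. a i j = \<zero>")
    case True
    have "card I < card J" using card insert.hyps by simp
    then obtain x where x: "\<And>j. j \<in> J \<Longrightarrow> x j \<in> S" "\<exists>j\<in>J. x j \<noteq> \<zero>"
      "\<And>r. r \<in> I \<Longrightarrow> (\<Oplus>j\<in>J. a r j \<otimes> x j) = \<zero>"
      using insert.IH[of J a] finJ aS by blast
    have "x j \<in> carrier R" if "j \<in> J" for j using x(1)[OF that] SR by blast
    then have "(\<Oplus>j\<in>J. a i j \<otimes> x j) = (\<Oplus>j\<in>J. \<zero>)"
      using True by (intro finsum_cong') auto
    then show ?thesis by (intro thesisI[of x]) (use x in auto)
  next
    case False
    then obtain j0 where j0: "j0 \<in> J" "a i j0 \<noteq> \<zero>" by blast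
    define J' where "J' = J - {j0}"
    define a' where "a' r j = a r j \<ominus> a r j0 \<otimes> inv (a i j0) \<otimes> a i j" for r j
    have J: "J = insert j0 J'" "j0 \<notin> J'" "finite J'" using j0 finJ J'_def by auto
    have ipS: "inv (a i j0) \<in> S" using subfield_m_inv(1)[OF S] aS j0 by simp
    have "card I < card J'" using card insert.hyps J by simp
    moreover have "a' r j \<in> S" if "r \<in> I" "j \<in> J'" for r j
      using that aS J ipS Sp(5,6,7) by (auto simp: a'_def a_minus_def)
    ultimately obtain y where y: "\<And>j. j \<in> J' \<Longrightarrow> y j \<in> S" "\<exists>j\<in>J'. y j \<noteq> \<zero>"
      "\<And>r. r \<in> I \<Longrightarrow> (\<Oplus>j\<in>J'. a' r j \<otimes> y j) = \<zero>"
      using insert.IH[of J' a'] J(3) by blast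
    define x where "x = y(j0 := \<ominus> (inv (a i j0) \<otimes> (\<Oplus>j\<in>J'. a i j \<otimes> y j)))"
    have "(\<Oplus>j\<in>J. a r j \<otimes> x j) = \<zero>" if "r \<in> insert i I" for r
      unfolding x_def J(1) using aS J y(1) j0(2) y(3) that
      by (intro homogeneous_system_pivot[OF S J(3,2)]) (auto simp: a'_def)
    moreover have "(\<Oplus>j\<in>J'. a i j \<otimes> y j) \<in> S"
      using aS J y(1) Sp(6) by (intro finsum_in_subring subfieldE(1) S) auto
    then have "x j \<in> S" if "j \<in> J" for j
      using that y(1) J ipS Sp(5,6) by (auto simp: x_def)
    moreover have "\<exists>j\<in>J. x j \<noteq> \<zero>" using y(2) J by (auto simp: x_def)
    ultimately show ?thesis using thesisI by blast
  qed
qed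

lemma exists_normalized_minimal_solution:
  fixes k :: nat
  assumes S: "subfield S R"
    and coeff: "\<And>x j. P x \<Longrightarrow> j < k \<Longrightarrow> x j \<in> S"
    and smult: "\<And>c x. c \<in> S \<Longrightarrow> P x \<Longrightarrow> P (\<lambda>j. c \<otimes> x j)"
    and w: "P w" "l < k" "w l \<noteq> \<zero>"
  obtains z a where "P z" "a < k" "z a = \<one>"
    and "\<And>y j. P y \<Longrightarrow> y a = \<zero> \<Longrightarrow> (\<And>i. i < k \<Longrightarrow> z i = \<zero> \<Longrightarrow> y i = \<zero>) \<Longrightarrow> j < k \<Longrightarrow> y j = \<zero>"
proof -
  define supp where "supp x = {j. j < k \<and> x j \<noteq> \<zero>}" for x
  let ?Q = "\<lambda>x. P x \<and> supp x \<noteq> {}"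
  obtain x where x: "?Q x" and least: "\<And>y. ?Q y \<Longrightarrow> card (supp x) \<le> card (supp y)"
    using ex_has_least_nat[of ?Q w "\<lambda>x. card (supp x)"] w by (auto simp: supp_def)
  obtain a where a: "a < k" "x a \<noteq> \<zero>" using x by (auto simp: supp_def)
  have xS: "x a \<in> S" using coeff x a by blast
  define c where "c = inv (x a)"
  have c: "c \<in> S" "c \<otimes> x a = \<one>" "c \<noteq> \<zero>"
    using subfield_m_inv[OF S, of "x a"] xS a(2) c_def by auto
  have cC: "c \<in> carrier R" using c(1) subfieldE(3)[OF S] by blast
  define z where "z = (\<lambda>j. c \<otimes> x j)"
  have "z i = \<zero> \<longleftrightarrow> x i = \<zero>" if "i < k" for i
    using coeff[OF conjunct1[OF x] that] subfieldE(3)[OF S] cC c(3) integral_iff by (auto simp: z_def)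
  then have supp_z: "supp z = supp x" by (auto simp: supp_def)
  show ?thesis
  proof
    show "P z" using smult[OF c(1)] x by (simp add: z_def)
    show "a < k" "z a = \<one>" using a c by (auto simp: z_def)
  next
    fix y j assume y: "P y" "y a = \<zero>" and sub: "\<And>i. i < k \<Longrightarrow> z i = \<zero> \<Longrightarrow> y i = \<zero>"
      and j: "j < k"
    have "supp y \<subseteq> supp x - {a}" using y(2) sub supp_z by (auto simp: supp_def)
    then have "card (supp y) < card (supp x)"
      using a by (intro psubset_card_mono) (auto simp: supp_def)
    then have "supp y = {}" using least[of y] y(1) by (meson leD)
    then show "y j = \<zero>" using j by (auto simp: supp_def)
  qed
qed

lemma exists_invariant_normalized_solution:
  fixes k :: nat
  assumes S: "subfield S R"
    and coeff: "\<And>x j. P x \<Longrightarrow> j < k \<Longrightarrow> x j \<in> S"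
    and smult: "\<And>c x. c \<in> S \<Longrightarrow> P x \<Longrightarrow> P (\<lambda>j. c \<otimes> x j)"
    and twist: "\<And>t x. t \<in> T \<Longrightarrow> P x \<Longrightarrow> P (\<lambda>j. x j \<ominus> t (x j))"
    and T: "\<And>t. t \<in> T \<Longrightarrow> t \<zero> = \<zero>" "\<And>t. t \<in> T \<Longrightarrow> t \<one> = \<one>"
      "\<And>t s. t \<in> T \<Longrightarrow> s \<in> S \<Longrightarrow> t s \<in> carrier R"
    and w: "P w" "l < k" "w l \<noteq> \<zero>"
  obtains z a where "P z" "a < k" "z a = \<one>" "\<And>t j. t \<in> T \<Longrightarrow> j < k \<Longrightarrow> t (z j) = z j"
proof (rule exists_normalized_minimal_solution[where P = P, OF S _ _ w])
  show "x j \<in> S" if "P x" "j < k" for x j using coeff that .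
  show "P (\<lambda>j. c \<otimes> x j)" if "c \<in> S" "P x" for c x using smult that .
  fix z a assume z: "P z" "a < k" "z a = \<one>"
    and min: "\<And>y j. P y \<Longrightarrow> y a = \<zero> \<Longrightarrow> (\<And>i. i < k \<Longrightarrow> z i = \<zero> \<Longrightarrow> y i = \<zero>) \<Longrightarrow> j < k \<Longrightarrow> y j = \<zero>"
  have "t (z j) = z j" if t: "t \<in> T" and j: "j < k" for t j
  proof -
    have zS: "z j \<in> S" using coeff[OF z(1) j] .
    have "z j \<ominus> t (z j) = \<zero>"
      by (rule min[OF twist[OF t z(1)] _ _ j]) (simp_all add: z(3) T(1,2)[OF t] a_minus_def r_neg)
    then show ?thesis
      using zS subfieldE(3)[OF S] T(3)[OF t zS] by (metis r_right_minus_eq subsetD)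
  qed
  then show thesis using that z by blast
qed

lemma finsum_lessThan_Suc_shift:
  assumes "\<And>j. j < Suc n \<Longrightarrow> f j \<in> carrier R"
  shows "(\<Oplus>j\<in>{..<Suc n}. f j) = f 0 \<oplus> (\<Oplus>j\<in>{..<n}. f (Suc j))"
proof -
  have e: "{..<Suc n} = insert 0 (Suc ` {..<n})" by (auto simp: image_iff less_Suc_eq_0_disj)
  have "(\<Oplus>j\<in>{..<Suc n}. f j) = f 0 \<oplus> (\<Oplus>j\<in>Suc ` {..<n}. f j)"
    unfolding e by (rule finsum_insert) (use assms in auto)
  also have "(\<Oplus>j\<in>Suc ` {..<n}. f j) = (\<Oplus>j\<in>{..<n}. f (Suc j))"
    using assms by (subst finsum_reindex) (auto simp: o_def)
  finally show ?thesis .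
qed

lemma combine_eq_finsum:
  assumes "set Ks \<subseteq> carrier R" and "set Us \<subseteq> carrier R" and "length Ks = length Us"
  shows "combine Ks Us = (\<Oplus>j\<in>{..<length Us}. Ks ! j \<otimes> Us ! j)"
  using assms
proof (induction Us arbitrary: Ks)
  case Nil
  then show ?case by simp
next
  case (Cons u Us)
  then obtain k Ks' where Ks: "Ks = k # Ks'" by (cases Ks) auto
  have C: "Ks ! j \<otimes> (u # Us) ! j \<in> carrier R" if "j < Suc (length Us)" for j
    using Cons.prems that nth_mem[of j Ks] nth_mem[of j "u # Us"] by (intro m_closed) auto
  have "combine Ks' Us = (\<Oplus>j\<in>{..<length Us}. Ks' ! j \<otimes> Us ! j)"
    using Cons.IH[of Ks'] Cons.prems Ks by simp
  then have "combine Ks (u # Us) = k \<otimes> u \<oplus> (\<Oplus>j\<in>{..<length Us}. Ks' ! j \<otimes> Us ! j)"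
    by (simp add: Ks)
  also have "\<dots> = Ks ! 0 \<otimes> (u # Us) ! 0 \<oplus> (\<Oplus>j\<in>{..<length Us}. Ks ! Suc j \<otimes> (u # Us) ! Suc j)"
    by (simp add: Ks)
  also have "\<dots> = (\<Oplus>j\<in>{..<Suc (length Us)}. Ks ! j \<otimes> (u # Us) ! j)"
    by (rule finsum_lessThan_Suc_shift[OF C, symmetric])
  finally show ?case by (simp only: length_Cons)
qed

lemma independent_finsum_eq_zero_imp:
  assumes K: "subfield K R" and ind: "independent K Us"
    and x: "\<And>j. j < length Us \<Longrightarrow> x j \<in> K"
    and rel: "(\<Oplus>j\<in>{..<length Us}. x j \<otimes> Us ! j) = \<zero>" and j: "j < length Us"
  shows "x j = \<zero>"
proof -
  define Ks where "Ks = map x [0..<length Us]"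
  have xC: "x j \<in> carrier R" and UsC: "Us ! j \<in> carrier R" if "j < length Us" for j
    using x[OF that] that subfieldE(3)[OF K] independent_in_carrier[OF ind] nth_mem by blast+
  have KsK: "set Ks \<subseteq> K" using x by (auto simp: Ks_def)
  have "combine Ks Us = (\<Oplus>j\<in>{..<length Us}. Ks ! j \<otimes> Us ! j)"
    using KsK subfieldE(3)[OF K] independent_in_carrier[OF ind] by (intro combine_eq_finsum) (auto simp: Ks_def)
  also have "\<dots> = (\<Oplus>j\<in>{..<length Us}. x j \<otimes> Us ! j)"
    using xC UsC by (intro finsum_cong') (auto simp: Ks_def)
  finally have "combine Ks Us = \<zero>" using rel by simp
  then have "set Ks \<subseteq> {\<zero>}" using independent_imp_trivial_combine[OF K ind KsK] by (simp add: Ks_def)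
  then show ?thesis using j by (auto simp: Ks_def image_subset_iff)
qed

lemma dependent_imp_nontrivial_finsum:
  assumes K: "subfield K R" and Us: "set Us \<subseteq> carrier R" and dep: "dependent K Us"
  obtains x l where "\<And>j. j < length Us \<Longrightarrow> x j \<in> K" "l < length Us" "x l \<noteq> \<zero>"
    and "(\<Oplus>j\<in>{..<length Us}. x j \<otimes> Us ! j) = \<zero>"
proof -
  obtain Ks where Ks: "length Ks = length Us" "combine Ks Us = \<zero>" "set Ks \<subseteq> K" "set Ks \<noteq> {\<zero>}"
    by (rule dependent_imp_non_trivial_combine[OF K Us dep])
  have "Us \<noteq> []" using dep by (metis independent.li_Nil)
  have "\<exists>l<length Us. Ks ! l \<noteq> \<zero>"
  proof (rule ccontr)
    assume "\<not> ?thesis"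
    then have "set Ks \<subseteq> {\<zero>}" using Ks(1) by (auto simp: in_set_conv_nth)
    moreover have "Ks \<noteq> []" using \<open>Us \<noteq> []\<close> Ks(1) by auto
    ultimately show False using Ks(4) by (metis set_empty subset_singletonD)
  qed
  then obtain l where l: "l < length Us" "Ks ! l \<noteq> \<zero>" by blast
  have KsK: "Ks ! j \<in> K" if "j < length Us" for j using Ks(1,3) that by (metis nth_mem subsetD)
  have "(\<Oplus>j\<in>{..<length Us}. Ks ! j \<otimes> Us ! j) = \<zero>"
    using Ks(2) combine_eq_finsum[OF _ Us Ks(1)] Ks(3) subfieldE(3)[OF K] by simp
  then show ?thesis using KsK l by (intro that[of "nth Ks" l])
qed

lemma subfield_Inter:
  assumes "\<F> \<noteq> {}" and "\<And>A. A \<in> \<F> \<Longrightarrow> subfield A R"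
  shows "subfield (\<Inter>\<F>) R"
proof (rule subfieldI')
  show "subring (\<Inter>\<F>) R" using subring_Inter assms subfieldE(1) by metis
next
  fix k assume "k \<in> \<Inter>\<F> - {\<zero>}"
  then show "inv k \<in> \<Inter>\<F>" using subfield_m_inv(1) assms(2) by blast
qed

lemma subfield_subalgebra:
  assumes "subfield E R" and "subfield M R" and "E \<subseteq> M"
  shows "subalgebra E M R"
  unfolding subalgebra_def subalgebra_axioms_def
  using subring.axioms(1)[OF subfieldE(1)[OF assms(2)]] subringE(6)[OF subfieldE(1)[OF assms(2)]] assms(3)
  by blast

lemma linear_map_zero_on_Span:
  assumes K: "subfield K R" and E: "subfield E R" and KE: "K \<subseteq> E" and Us: "set Us \<subseteq> E"
    and f: "\<And>v. v \<in> E \<Longrightarrow> f v \<in> carrier R"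
    and add: "\<And>v w. v \<in> E \<Longrightarrow> w \<in> E \<Longrightarrow> f (v \<oplus> w) = f v \<oplus> f w"
    and smult: "\<And>c v. c \<in> K \<Longrightarrow> v \<in> E \<Longrightarrow> f (c \<otimes> v) = c \<otimes> f v"
    and zero: "\<And>u. u \<in> set Us \<Longrightarrow> f u = \<zero>"
  shows "v \<in> Span K Us \<Longrightarrow> f v = \<zero>"
  using Us zero
proof (induction Us arbitrary: v)
  case Nil
  have "f \<zero> = \<zero>"
    using smult[of \<zero> \<zero>] f[of \<zero>] subringE(2)[OF subfieldE(1)[OF K]] subringE(2)[OF subfieldE(1)[OF E]]
    by simp
  then show ?case using Nil by simp
next
  case (Cons u Us)
  obtain c w where v: "c \<in> K" "w \<in> Span K Us" "v = c \<otimes> u \<oplus> w"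
    using Cons.prems(1) line_extension_mem_iff by auto
  have w: "w \<in> E" using subalgebra_Span_incl[OF K subfield_subalgebra[OF K E KE]] v(2) Cons.prems(2) by auto
  have u: "u \<in> E" "c \<otimes> u \<in> E"
    using Cons.prems(2) v(1) KE subringE(6)[OF subfieldE(1)[OF E]] by auto
  have "f w = \<zero>" "f u = \<zero>" using Cons.IH[OF v(2)] Cons.prems(2,3) by auto
  then show ?case
    using v add[OF u(2) w] smult[OF v(1) u(1)] subfieldE(3)[OF K] by auto
qed

lemma Span_mono_subfield:
  assumes "K \<subseteq> E" and "set Us \<subseteq> carrier R"
  shows "Span K Us \<subseteq> Span E Us"
  using assms(2)
proof (induction Us)
  case Nil
  then show ?case by simp
next
  case (Cons u Us)
  show ?case
  proof
    fix x assume "x \<in> Span K (u # Us)"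
    then obtain k v where "k \<in> K" "v \<in> Span K Us" "x = k \<otimes> u \<oplus> v"
      using line_extension_mem_iff by auto
    then show "x \<in> Span E (u # Us)"
      using assms(1) Cons line_extension_mem_iff by auto
  qed
qed

lemma finite_dimension_intermediate:
  assumes K: "subfield K R" and E: "subfield E R" and M: "subfield M R"
    and KE: "K \<subseteq> E" and EM: "E \<subseteq> M" and fd: "finite_dimension K M"
  shows "finite_dimension E M"
proof -
  obtain Us where Us: "set Us \<subseteq> carrier R" "Span K Us = M"
    using exists_base[OF K finite_dimensionE[OF K fd]] by blast
  have "Span E Us \<subseteq> M"
    using subalgebra_Span_incl[OF E subfield_subalgebra[OF E M EM]] Span_base_incl[OF K Us(1)] Us(2)
    by simp
  moreover have "M \<subseteq> Span E Us" using Span_mono_subfield[OF KE Us(1)] Us(2) by simp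
  ultimately show ?thesis using Span_finite_dimension[OF E Us(1)] by simp
qed

lemma dimension_pos:
  assumes "subfield K R" and "subfield M R" and "dimension n K M"
  shows "0 < n"
proof (rule ccontr)
  assume "\<not> 0 < n"
  then have "M = {\<zero>}" using dimension_zero[OF assms(1)] assms(3) by simp
  then show False using subringE(3)[OF subfieldE(1)[OF assms(2)]] by simp
qed

lemma dimension_one_imp_eq:
  assumes E: "subfield E R" and E': "subfield E' R" and EE': "E \<subseteq> E'" and d: "dimension 1 E E'"
  shows "E' = E"
proof -
  have one: "\<one> \<in> E'" using subringE(3)[OF subfieldE(1)[OF E']] .
  have "Span E [\<one>] = E'"
    using independent_length_eq_dimension[OF E d li_Cons[OF _ _ li_Nil]] one by auto
  moreover have "Span E [\<one>] = E"
    using subfieldE(3)[OF E] by (auto simp: line_extension_mem_iff subsetD)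
  ultimately show ?thesis by simp
qed

lemma finite_dimension_tower:
  assumes K: "subfield K R" and E: "subfield E R" and M: "subfield M R"
    and KE: "K \<subseteq> E" and EM: "E \<subseteq> M" and fd: "finite_dimension K M"
  shows "finite_dimension K E" and "finite_dimension E M"
    and "(dim over K) M = (dim over K) E * (dim over E) M"
proof -
  show fdE: "finite_dimension K E"
    using subalbegra_incl_imp_finite_dimension[OF K fd subfield_subalgebra[OF K E KE] EM] .
  show fdM: "finite_dimension E M" using finite_dimension_intermediate[OF K E M KE EM fd] .
  show "(dim over K) M = (dim over K) E * (dim over E) M"
    using telescopic_base_dim(2)[OF K E fdE fdM] .
qed

lemma dim_pos:
  "subfield K R \<Longrightarrow> subfield M R \<Longrightarrow> finite_dimension K M \<Longrightarrow> 0 < (dim over K) M"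
  using dimension_pos finite_dimensionE by blast

lemma dim_eq_one_imp_eq:
  "subfield E R \<Longrightarrow> subfield M R \<Longrightarrow> E \<subseteq> M \<Longrightarrow> finite_dimension E M \<Longrightarrow> (dim over E) M = 1 \<Longrightarrow> M = E"
  using dimension_one_imp_eq finite_dimensionE by metis

end

section \<open>Counting in groups and direct products\<close>

lemma mult_eq_mult_imp_eq:
  fixes a b c d :: nat
  assumes "a \<le> c" and "b \<le> d" and "0 < c" and "0 < d" and "a * b = c * d"
  shows "a = c" and "b = d"
proof -
  have "a * b \<le> c * b" and "c * b \<le> c * d" using assms(1,2) by simp_all
  then have "c * b = c * d" using assms(5) by linarith
  then show "b = d" using assms(3) by simp
  then show "a = c" using assms(4,5) by simp
qed

lemma (in group) card_carrier_eq_card_image_mult: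
  assumes fin: "finite (carrier G)" and H: "subgroup H G"
    and f: "\<And>s t. s \<in> carrier G \<Longrightarrow> t \<in> carrier G \<Longrightarrow> f s = f t \<longleftrightarrow> inv s \<otimes> t \<in> H"
  shows "card (carrier G) = card (f ` carrier G) * card H"
proof -
  have HG: "H \<subseteq> carrier G" using subgroup.subset[OF H] .
  have fibre: "{t \<in> carrier G. f t = f s} = (\<lambda>h. s \<otimes> h) ` H" if s: "s \<in> carrier G" for s
  proof
    show "{t \<in> carrier G. f t = f s} \<subseteq> (\<lambda>h. s \<otimes> h) ` H"
    proof
      fix t assume t: "t \<in> {t \<in> carrier G. f t = f s}"
      then have "inv s \<otimes> t \<in> H" using f[OF s, of t] by auto
      moreover have "t = s \<otimes> (inv s \<otimes> t)" using s t by (simp add: m_assoc[symmetric])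
      ultimately show "t \<in> (\<lambda>h. s \<otimes> h) ` H" by blast
    qed
    show "(\<lambda>h. s \<otimes> h) ` H \<subseteq> {t \<in> carrier G. f t = f s}"
    proof
      fix t assume "t \<in> (\<lambda>h. s \<otimes> h) ` H"
      then obtain h where h: "h \<in> H" "t = s \<otimes> h" by blast
      have hC: "h \<in> carrier G" using h(1) HG by blast
      then have tC: "t \<in> carrier G" and "inv s \<otimes> t = h" using s h(2) by (simp_all add: m_assoc[symmetric])
      then have "f s = f t" using f[OF s tC] h(1) by simp
      then show "t \<in> {t \<in> carrier G. f t = f s}" using tC by simp
    qed
  qed
  have card_fibre: "card {t \<in> carrier G. f t = y} = card H" if y: "y \<in> f ` carrier G" for y
  proof -
    obtain s where s: "s \<in> carrier G" "y = f s" using y by blast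
    have inj: "inj_on (\<lambda>h. s \<otimes> h) H"
    proof (rule inj_onI)
      fix a b assume "a \<in> H" "b \<in> H" "s \<otimes> a = s \<otimes> b"
      then show "a = b" using l_cancel[of s a b] s(1) HG by blast
    qed
    have "card {t \<in> carrier G. f t = y} = card ((\<lambda>h. s \<otimes> h) ` H)" using fibre[OF s(1)] s(2) by simp
    also have "\<dots> = card H" using inj by (rule card_image)
    finally show ?thesis .
  qed
  have "card (\<Union>y\<in>f ` carrier G. {t \<in> carrier G. f t = y})
      = (\<Sum>y\<in>f ` carrier G. card {t \<in> carrier G. f t = y})"
    using fin by (intro card_UN_disjoint) auto
  moreover have "(\<Union>y\<in>f ` carrier G. {t \<in> carrier G. f t = y}) = carrier G" by blast
  moreover have "(\<Sum>y\<in>f ` carrier G. card {t \<in> carrier G. f t = y}) = (\<Sum>y\<in>f ` carrier G. card H)"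
    by (rule sum.cong) (simp_all add: card_fibre)
  ultimately show ?thesis by simp
qed

lemma finite_group_iso_nat_monoid:
  fixes G :: "('c, 'd) monoid_scheme"
  assumes G: "group G" and fin: "finite (carrier G)"
  obtains A :: "nat monoid" where "group A" and "G \<cong> A"
proof -
  obtain f where f: "bij_betw f (carrier G) {0..<card (carrier G)}"
    using ex_bij_betw_finite_nat[OF fin] by blast
  have inj: "inj_on f (carrier G)" using f bij_betw_imp_inj_on by blast
  define g where "g = inv_into (carrier G) f"
  have gf: "\<And>x. x \<in> carrier G \<Longrightarrow> g (f x) = x" using inj by (simp add: g_def inv_into_f_f)
  define A :: "nat monoid"
    where "A = \<lparr>carrier = f ` carrier G, monoid.mult = (\<lambda>a b. f (g a \<otimes>\<^bsub>G\<^esub> g b)), one = f \<one>\<^bsub>G\<^esub>\<rparr>"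
  have iso: "f \<in> iso G A"
    using inj gf by (auto simp: iso_def hom_def bij_betw_def A_def)
  have "group (A\<lparr>one := f \<one>\<^bsub>G\<^esub>\<rparr>)" using group.iso_imp_img_group[OF G iso] .
  moreover have "A\<lparr>one := f \<one>\<^bsub>G\<^esub>\<rparr> = A" by (simp add: A_def)
  ultimately show ?thesis using that iso is_isoI by auto
qed

lemma internal_direct_product_iso:
  assumes G: "group G" and fin: "finite (carrier G)"
    and N: "N \<lhd> G" and H: "H \<lhd> G" and NH: "N \<inter> H \<subseteq> {\<one>\<^bsub>G\<^esub>}"
    and card: "card N * card H = card (carrier G)"
  obtains A B :: "nat monoid" where "group A" and "group B"
    and "order A = card N" and "order B = card H" and "G \<cong> A \<times>\<times> B"
proof -
  interpret G: group G by (rule G)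
  have sN: "subgroup N G" and sH: "subgroup H G" using N H by (auto simp: normal_def)
  have finN: "finite N" and finH: "finite H"
    using fin subgroup.subset[OF sN] subgroup.subset[OF sH] finite_subset by metis+
  interpret D: group_disjoint_sum G N H by (simp add: group_disjoint_sum_def G sN sH)
  have "inj_on (\<lambda>(x, y). x \<otimes>\<^bsub>G\<^esub> y) (N \<times> H)"
    using D.cancel NH by (auto simp: inj_on_def)
  moreover have "N <#>\<^bsub>G\<^esub> H = (\<lambda>(x, y). x \<otimes>\<^bsub>G\<^esub> y) ` (N \<times> H)"
    by (auto simp: set_mult_def)
  ultimately have "card (N <#>\<^bsub>G\<^esub> H) = card N * card H"
    by (simp add: card_image card_cartesian_product)
  moreover have "N <#>\<^bsub>G\<^esub> H \<subseteq> carrier G"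
    using subgroup.subset[OF sN] subgroup.subset[OF sH] by (auto simp: set_mult_def)
  ultimately have NHG: "N <#>\<^bsub>G\<^esub> H = carrier G" using card_subset_eq[OF fin] card by metis
  have "(\<lambda>(x, y). x \<otimes>\<^bsub>G\<^esub> y) \<in> iso (subgroup_generated G N \<times>\<times> subgroup_generated G H) G"
    using G.iso_group_mul_gen[OF N H] NH NHG by simp
  moreover have "group (subgroup_generated G N \<times>\<times> subgroup_generated G H)"
    by (simp add: DirProd_group)
  ultimately have GP: "G \<cong> subgroup_generated G N \<times>\<times> subgroup_generated G H"
    using group.iso_sym is_isoI by blast
  have cN: "carrier (subgroup_generated G N) = N" and cH: "carrier (subgroup_generated G H) = H"
    using subgroup.carrier_subgroup_generated_subgroup sN sH by blast+
  obtain A :: "nat monoid" where A: "group A" "subgroup_generated G N \<cong> A"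
    using finite_group_iso_nat_monoid[of "subgroup_generated G N"] finN cN by auto
  obtain B :: "nat monoid" where B: "group B" "subgroup_generated G H \<cong> B"
    using finite_group_iso_nat_monoid[of "subgroup_generated G H"] finH cH by auto
  have "G \<cong> A \<times>\<times> B"
    using GP group.DirProd_iso_trans[OF G.group_subgroup_generated A(2) B(2)] iso_trans by blast
  moreover have "order A = card N" "order B = card H"
    using iso_same_card[OF A(2)] iso_same_card[OF B(2)] cN cH by (simp_all add: order_def)
  ultimately show ?thesis using that A(1) B(1) by blast
qed

lemma card_preimage_bij_betw:
  assumes "bij_betw f U V"
  shows "card {x \<in> U. P (f x)} = card {y \<in> V. P y}"
proof -
  have "f ` {x \<in> U. P (f x)} = {y \<in> V. P y}"
    using assms by (auto simp: bij_betw_def)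
  moreover have "inj_on f {x \<in> U. P (f x)}"
    using bij_betw_imp_inj_on[OF assms] by (rule inj_on_subset) auto
  ultimately show ?thesis using card_image by metis
qed

lemma DirProd_iso_kernels:
  fixes A :: "'x monoid" and B :: "'y monoid"
  assumes G: "group G" and A: "group A" and B: "group B" and phi: "phi \<in> iso G (A \<times>\<times> B)"
  defines "N\<^sub>A \<equiv> kernel G B (snd \<circ> phi)" and "N\<^sub>B \<equiv> kernel G A (fst \<circ> phi)"
  shows "N\<^sub>A \<lhd> G" and "N\<^sub>B \<lhd> G"
    and "card N\<^sub>A = card (carrier A)" and "card N\<^sub>B = card (carrier B)"
    and "N\<^sub>A \<inter> N\<^sub>B = {\<one>\<^bsub>G\<^esub>}"
    and "\<And>s. s \<in> carrier G \<Longrightarrow> \<exists>a\<in>N\<^sub>A. \<exists>b\<in>N\<^sub>B. s = a \<otimes>\<^bsub>G\<^esub> b"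
proof -
  interpret G: group G by (rule G)
  interpret A: group A by (rule A)
  interpret B: group B by (rule B)
  have hom: "phi \<in> hom G (A \<times>\<times> B)" and bij: "bij_betw phi (carrier G) (carrier A \<times> carrier B)"
    using phi by (auto simp: iso_def)
  have inj: "inj_on phi (carrier G)" using bij_betw_imp_inj_on[OF bij] .
  have "fst \<circ> phi \<in> hom G A" and "snd \<circ> phi \<in> hom G B" using hom hom_pairwise by blast+
  then interpret pA: group_hom G A "fst \<circ> phi" + pB: group_hom G B "snd \<circ> phi"
    by (simp_all add: group_hom_def group_hom_axioms_def G A B)
  show "N\<^sub>A \<lhd> G" "N\<^sub>B \<lhd> G" using pA.normal_kernel pB.normal_kernel by (simp_all add: N\<^sub>A_def N\<^sub>B_def)
  have "{p \<in> carrier A \<times> carrier B. snd p = \<one>\<^bsub>B\<^esub>} = carrier A \<times> {\<one>\<^bsub>B\<^esub>}"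
    and "{p \<in> carrier A \<times> carrier B. fst p = \<one>\<^bsub>A\<^esub>} = {\<one>\<^bsub>A\<^esub>} \<times> carrier B" by auto
  then show "card N\<^sub>A = card (carrier A)" "card N\<^sub>B = card (carrier B)"
    using card_preimage_bij_betw[OF bij, of "\<lambda>p. snd p = \<one>\<^bsub>B\<^esub>"]
      card_preimage_bij_betw[OF bij, of "\<lambda>p. fst p = \<one>\<^bsub>A\<^esub>"]
    by (simp_all add: N\<^sub>A_def N\<^sub>B_def kernel_def card_cartesian_product)
  have one: "phi \<one>\<^bsub>G\<^esub> = (\<one>\<^bsub>A\<^esub>, \<one>\<^bsub>B\<^esub>)"
    using group_hom.hom_one[of G "A \<times>\<times> B" phi] DirProd_group[OF A B] hom
    by (simp add: group_hom_def group_hom_axioms_def G)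
  show "N\<^sub>A \<inter> N\<^sub>B = {\<one>\<^bsub>G\<^esub>}"
  proof
    show "N\<^sub>A \<inter> N\<^sub>B \<subseteq> {\<one>\<^bsub>G\<^esub>}"
    proof
      fix s assume "s \<in> N\<^sub>A \<inter> N\<^sub>B"
      then have s: "s \<in> carrier G" "phi s = phi \<one>\<^bsub>G\<^esub>"
        by (simp_all add: N\<^sub>A_def N\<^sub>B_def kernel_def one prod_eq_iff)
      show "s \<in> {\<one>\<^bsub>G\<^esub>}" using inj_onD[OF inj s(2) s(1) G.one_closed] by simp
    qed
  qed (simp add: N\<^sub>A_def N\<^sub>B_def kernel_def one)
  fix s assume s: "s \<in> carrier G"
  have img: "phi ` carrier G = carrier A \<times> carrier B" using bij_betw_imp_surj_on[OF bij] .
  obtain x y where xy: "phi s = (x, y)" by (cases "phi s")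
  moreover have "phi s \<in> carrier A \<times> carrier B" using img s by blast
  ultimately have x: "x \<in> carrier A" and y: "y \<in> carrier B" by simp_all
  have "(x, \<one>\<^bsub>B\<^esub>) \<in> phi ` carrier G" "(\<one>\<^bsub>A\<^esub>, y) \<in> phi ` carrier G" using img x y by simp_all
  then obtain a b where a: "a \<in> carrier G" "phi a = (x, \<one>\<^bsub>B\<^esub>)"
    and b: "b \<in> carrier G" "phi b = (\<one>\<^bsub>A\<^esub>, y)" by (metis imageE)
  have "phi (a \<otimes>\<^bsub>G\<^esub> b) = phi s" using hom a b xy x y by (simp add: hom_def)
  then have "s = a \<otimes>\<^bsub>G\<^esub> b" using inj a b s by (simp add: inj_on_def)
  moreover have "a \<in> N\<^sub>A" "b \<in> N\<^sub>B" using a b by (simp_all add: N\<^sub>A_def N\<^sub>B_def kernel_def)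
  ultimately show "\<exists>a\<in>N\<^sub>A. \<exists>b\<in>N\<^sub>B. s = a \<otimes>\<^bsub>G\<^esub> b" by blast
qed

section \<open>Embeddings and Dedekind's lemma\<close>

definition embedding_over :: "('a, 'b) ring_scheme \<Rightarrow> 'a set \<Rightarrow> 'a set \<Rightarrow> ('a \<Rightarrow> 'a) \<Rightarrow> bool"
  where "embedding_over R K E s \<longleftrightarrow> s \<in> ring_hom (R\<lparr>carrier := E\<rparr>) R \<and> (\<forall>k\<in>K. s k = k)"

context field
begin

lemma subfield_homE:
  assumes E: "subfield E R" and s: "s \<in> ring_hom (R\<lparr>carrier := E\<rparr>) R"
  shows "\<And>v. v \<in> E \<Longrightarrow> s v \<in> carrier R"
    and "\<And>v w. v \<in> E \<Longrightarrow> w \<in> E \<Longrightarrow> s (v \<oplus> w) = s v \<oplus> s w"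
    and "\<And>v w. v \<in> E \<Longrightarrow> w \<in> E \<Longrightarrow> s (v \<otimes> w) = s v \<otimes> s w"
    and "s \<one> = \<one>" and "s \<zero> = \<zero>"
    and "\<And>v. v \<in> E \<Longrightarrow> s (\<ominus> v) = \<ominus> s v"
proof -
  note Ep = subringE[OF subfieldE(1)[OF E]]
  show closed: "\<And>v. v \<in> E \<Longrightarrow> s v \<in> carrier R"
    and add: "\<And>v w. v \<in> E \<Longrightarrow> w \<in> E \<Longrightarrow> s (v \<oplus> w) = s v \<oplus> s w"
    and "\<And>v w. v \<in> E \<Longrightarrow> w \<in> E \<Longrightarrow> s (v \<otimes> w) = s v \<otimes> s w" and "s \<one> = \<one>"
    using ring_hom_closed[OF s] ring_hom_add[OF s] ring_hom_mult[OF s] ring_hom_one[OF s] by auto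
  show zero: "s \<zero> = \<zero>"
    using ring_hom_zero[OF s subring_is_ring[OF subfieldE(1)[OF E]] ring_axioms] by simp
  fix v assume v: "v \<in> E"
  have "s (\<ominus> v) \<oplus> s v = \<zero>" using add[OF Ep(5)[OF v] v] zero subfieldE(3)[OF E] v by (simp add: l_neg subsetD)
  then show "s (\<ominus> v) = \<ominus> s v" using closed Ep(5) v by (metis minus_equality)
qed

lemma subfield_hom_finsum:
  assumes E: "subfield E R" and s: "s \<in> ring_hom (R\<lparr>carrier := E\<rparr>) R" and f: "f ` A \<subseteq> E"
  shows "s (\<Oplus>i\<in>A. f i) = (\<Oplus>i\<in>A. s (f i))"
  using f
proof (induction A rule: infinite_finite_induct)
  case (insert a A)
  have "f ` insert a A \<subseteq> carrier R" using insert.prems subfieldE(3)[OF E] by blast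
  moreover have "(\<Oplus>i\<in>A. f i) \<in> E"
    using insert.prems by (intro finsum_in_subring subfieldE(1) E) auto
  ultimately show ?case
    using insert subfield_homE[OF E s] by (simp add: finsum_insert Pi_def image_subset_iff)
qed (simp_all add: subfield_homE(5)[OF E s])

lemma subfield_hom_relation:
  assumes M: "subfield M R" and s: "s \<in> ring_hom (R\<lparr>carrier := M\<rparr>) R"
    and x: "\<And>j. j < k \<Longrightarrow> x j \<in> M" and u: "\<And>j. j < k \<Longrightarrow> u j \<in> M"
    and rel: "(\<Oplus>j\<in>{..<k}. x j \<otimes> u j) = \<zero>"
  shows "(\<Oplus>j\<in>{..<k}. s (x j) \<otimes> s (u j)) = \<zero>"
proof -
  have "(\<Oplus>j\<in>{..<k}. s (x j) \<otimes> s (u j)) = (\<Oplus>j\<in>{..<k}. s (x j \<otimes> u j))"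
    using subfield_homE(1,3)[OF M s] x u by (intro finsum_cong') auto
  also have "\<dots> = s (\<Oplus>j\<in>{..<k}. x j \<otimes> u j)"
    using x u subringE(6)[OF subfieldE(1)[OF M]] by (intro subfield_hom_finsum[OF M s, symmetric]) auto
  finally show ?thesis using rel subfield_homE(5)[OF M s] by simp
qed

lemma embedding_over_restrict:
  assumes M: "subfield M R" and E: "subfield E R" and EM: "E \<subseteq> M" and KE: "K \<subseteq> E"
    and s: "embedding_over R K M s"
  shows "embedding_over R K E (restrict s E)"
proof -
  have h: "s \<in> ring_hom (R\<lparr>carrier := M\<rparr>) R" using s by (simp add: embedding_over_def)
  note Ep = subringE[OF subfieldE(1)[OF E]]
  note sM = subfield_homE[OF M h]
  have "restrict s E \<in> ring_hom (R\<lparr>carrier := E\<rparr>) R"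
  proof (rule ring_hom_memI)
    fix x y assume "x \<in> carrier (R\<lparr>carrier := E\<rparr>)" "y \<in> carrier (R\<lparr>carrier := E\<rparr>)"
    then have xy: "x \<in> E" "y \<in> E" "x \<in> M" "y \<in> M" "x \<otimes> y \<in> E" "x \<oplus> y \<in> E"
      using EM Ep(6,7) by auto
    then show "restrict s E (x \<otimes>\<^bsub>R\<lparr>carrier := E\<rparr>\<^esub> y) = restrict s E x \<otimes> restrict s E y"
      and "restrict s E (x \<oplus>\<^bsub>R\<lparr>carrier := E\<rparr>\<^esub> y) = restrict s E x \<oplus> restrict s E y"
      using sM(2,3) by auto
  qed (use sM(1,4) EM Ep(3) in auto)
  then show ?thesis using s KE by (auto simp: embedding_over_def)
qed

lemma embedding_relation_twist:
  fixes k :: nat and sg :: "nat \<Rightarrow> 'a \<Rightarrow> 'a"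
  assumes E: "subfield E R"
    and hom: "\<And>j. j < k \<Longrightarrow> sg j \<in> ring_hom (R\<lparr>carrier := E\<rparr>) R"
    and y: "\<And>j. j < k \<Longrightarrow> y j \<in> carrier R"
    and rel: "\<And>v. v \<in> E \<Longrightarrow> (\<Oplus>j\<in>{..<k}. y j \<otimes> sg j v) = \<zero>"
    and t: "t \<in> E" and c: "c \<in> carrier R" and v: "v \<in> E"
  shows "(\<Oplus>j\<in>{..<k}. y j \<otimes> (sg j t \<ominus> c) \<otimes> sg j v) = \<zero>"
proof -
  note sgE = subfield_homE[OF E hom]
  have tv: "t \<otimes> v \<in> E" using t v subringE(6)[OF subfieldE(1)[OF E]] by simp
  have "(\<Oplus>j\<in>{..<k}. y j \<otimes> (sg j t \<ominus> c) \<otimes> sg j v)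
      = (\<Oplus>j\<in>{..<k}. y j \<otimes> sg j (t \<otimes> v) \<ominus> c \<otimes> (y j \<otimes> sg j v))"
  proof (rule finsum_cong')
    fix j assume "j \<in> {..<k}"
    then have j: "j < k" by simp
    have C: "y j \<in> carrier R" "sg j t \<in> carrier R" "sg j v \<in> carrier R" using y sgE(1) j t v by auto
    show "y j \<otimes> (sg j t \<ominus> c) \<otimes> sg j v = y j \<otimes> sg j (t \<otimes> v) \<ominus> c \<otimes> (y j \<otimes> sg j v)"
      unfolding sgE(3)[OF j t v] using C c by algebra
  qed (use y sgE(1) tv v c in auto)
  also have "\<dots> = (\<Oplus>j\<in>{..<k}. y j \<otimes> sg j (t \<otimes> v)) \<ominus> c \<otimes> (\<Oplus>j\<in>{..<k}. y j \<otimes> sg j v)"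
  proof -
    have "(\<Oplus>j\<in>{..<k}. c \<otimes> (y j \<otimes> sg j v)) = c \<otimes> (\<Oplus>j\<in>{..<k}. y j \<otimes> sg j v)"
      using y sgE(1) v c by (intro finsum_rdistr[symmetric]) auto
    then show ?thesis using y sgE(1) tv v c by (subst finsum_diff) (auto simp: Pi_def)
  qed
  also have "\<dots> = \<zero>" using rel[OF tv] rel[OF v] c by simp
  finally show ?thesis .
qed

lemma embeddings_linearly_independent:
  fixes k :: nat and sg :: "nat \<Rightarrow> 'a \<Rightarrow> 'a"
  assumes E: "subfield E R"
    and hom: "\<And>j. j < k \<Longrightarrow> sg j \<in> ring_hom (R\<lparr>carrier := E\<rparr>) R"
    and dist: "\<And>i j. i < k \<Longrightarrow> j < k \<Longrightarrow> i \<noteq> j \<Longrightarrow> \<exists>t\<in>E. sg i t \<noteq> sg j t"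
    and x: "\<And>j. j < k \<Longrightarrow> x j \<in> carrier R"
    and rel: "\<And>v. v \<in> E \<Longrightarrow> (\<Oplus>j\<in>{..<k}. x j \<otimes> sg j v) = \<zero>"
    and j: "j < k"
  shows "x j = \<zero>"
proof (rule ccontr)
  assume xj: "x j \<noteq> \<zero>"
  note sgE = subfield_homE[OF E hom]
  define P where "P y \<longleftrightarrow> (\<forall>j<k. y j \<in> carrier R) \<and> (\<forall>v\<in>E. (\<Oplus>j\<in>{..<k}. y j \<otimes> sg j v) = \<zero>)"
    for y
  have Px: "P x" using x rel by (simp add: P_def)
  show False
  proof (rule exists_normalized_minimal_solution[where P = P, OF carrier_is_subfield _ _ Px j xj])
    show "y i \<in> carrier R" if "P y" "i < k" for y i using that by (simp add: P_def)
    show "P (\<lambda>j. c \<otimes> y j)" if c: "c \<in> carrier R" and y: "P y" for c y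
    proof -
      have "(\<Oplus>j\<in>{..<k}. c \<otimes> y j \<otimes> sg j v) = c \<otimes> (\<Oplus>j\<in>{..<k}. y j \<otimes> sg j v)" if "v \<in> E" for v
        using y c sgE(1) that by (intro finsum_smult_left) (auto simp: P_def)
      then show ?thesis using c y by (simp add: P_def)
    qed
  next
    fix z a assume z: "P z" "a < k" "z a = \<one>"
      and min: "\<And>y i. P y \<Longrightarrow> y a = \<zero> \<Longrightarrow> (\<And>i. i < k \<Longrightarrow> z i = \<zero> \<Longrightarrow> y i = \<zero>) \<Longrightarrow> i < k \<Longrightarrow> y i = \<zero>"
    have zC: "\<And>j. j < k \<Longrightarrow> z j \<in> carrier R" using z(1) by (simp add: P_def)
    have only_a: "z b = \<zero>" if b: "b < k" "b \<noteq> a" for b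
    proof -
      obtain t where t: "t \<in> E" "sg b t \<noteq> sg a t" using dist[OF b(1) z(2) b(2)] by blast
      define y where "y j = z j \<otimes> (sg j t \<ominus> sg a t)" for j
      have "P y"
        using embedding_relation_twist[OF E hom zC _ t(1) sgE(1)[OF z(2) t(1)]] z(1) zC sgE(1) t(1) z(2)
        by (simp add: P_def y_def)
      then have "y b = \<zero>"
        by (rule min[OF _ _ _ b(1)]) (use zC sgE(1) t(1) z(2) in \<open>simp_all add: y_def r_neg a_minus_def\<close>)
      moreover have "sg b t \<ominus> sg a t \<noteq> \<zero>" "sg b t \<ominus> sg a t \<in> carrier R"
        using t sgE(1)[OF b(1)] sgE(1)[OF z(2)] r_right_minus_eq by auto
      ultimately show ?thesis using zC[OF b(1)] integral_iff by (auto simp: y_def)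
    qed
    have "(\<Oplus>j\<in>{..<k}. z j \<otimes> sg j \<one>) = (\<Oplus>j\<in>{..<k}. if a = j then \<one> else \<zero>)"
      using only_a z(2,3) sgE(4) zC by (intro finsum_cong') auto
    also have "\<dots> = \<one>" using finsum_singleton[of a "{..<k}" "\<lambda>j. \<one>"] z(2) by simp
    finally show False using z(1) subringE(3)[OF subfieldE(1)[OF E]] by (auto simp: P_def)
  qed
qed

lemma embedding_relation_on_Span:
  fixes k :: nat and sg :: "nat \<Rightarrow> 'a \<Rightarrow> 'a"
  assumes K: "subfield K R" and E: "subfield E R" and KE: "K \<subseteq> E"
    and emb: "\<And>j. j < k \<Longrightarrow> embedding_over R K E (sg j)"
    and x: "\<And>j. j < k \<Longrightarrow> x j \<in> carrier R"
    and Us: "set Us \<subseteq> E" and rel: "\<And>u. u \<in> set Us \<Longrightarrow> (\<Oplus>j\<in>{..<k}. x j \<otimes> sg j u) = \<zero>"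
    and v: "v \<in> Span K Us"
  shows "(\<Oplus>j\<in>{..<k}. x j \<otimes> sg j v) = \<zero>"
proof -
  have hom: "\<And>j. j < k \<Longrightarrow> sg j \<in> ring_hom (R\<lparr>carrier := E\<rparr>) R"
    and fix_K: "\<And>j c. j < k \<Longrightarrow> c \<in> K \<Longrightarrow> sg j c = c"
    using emb by (auto simp: embedding_over_def)
  note sgE = subfield_homE[OF E hom]
  define f where "f v = (\<Oplus>j\<in>{..<k}. x j \<otimes> sg j v)" for v
  have "f v = \<zero>"
  proof (rule linear_map_zero_on_Span[where f = f, OF K E KE Us _ _ _ _ v])
    show "f v \<in> carrier R" if "v \<in> E" for v
      unfolding f_def using x sgE(1) that by (intro finsum_closed) auto
    show "f (v \<oplus> w) = f v \<oplus> f w" if "v \<in> E" "w \<in> E" for v w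
    proof -
      have "f (v \<oplus> w) = (\<Oplus>j\<in>{..<k}. x j \<otimes> sg j v \<oplus> x j \<otimes> sg j w)"
        unfolding f_def using x sgE(1,2) that by (intro finsum_cong') (auto simp: r_distr)
      also have "\<dots> = f v \<oplus> f w"
        unfolding f_def by (rule finsum_addf) (use x sgE(1) that in auto)
      finally show ?thesis .
    qed
    show "f (c \<otimes> v) = c \<otimes> f v" if c: "c \<in> K" and v: "v \<in> E" for c v
    proof -
      have cC: "c \<in> carrier R" "c \<in> E" using c KE subfieldE(3)[OF K] by auto
      have "f (c \<otimes> v) = (\<Oplus>j\<in>{..<k}. c \<otimes> (x j \<otimes> sg j v))"
        unfolding f_def
      proof (rule finsum_cong')
        fix j assume "j \<in> {..<k}"
        then have j: "j < k" by simp
        have "sg j (c \<otimes> v) = c \<otimes> sg j v" using sgE(3)[OF j cC(2) v] fix_K[OF j c] by simp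
        then show "x j \<otimes> sg j (c \<otimes> v) = c \<otimes> (x j \<otimes> sg j v)"
          using x j sgE(1)[OF j v] cC(1) by (simp add: m_lcomm)
      qed (use x sgE(1) v cC in auto)
      also have "\<dots> = c \<otimes> f v"
        unfolding f_def by (rule finsum_rdistr[symmetric]) (use x sgE(1) v cC in auto)
      finally show ?thesis .
    qed
    show "f u = \<zero>" if "u \<in> set Us" for u using rel[OF that] by (simp add: f_def)
  qed
  then show ?thesis by (simp add: f_def)
qed

lemma embedding_family_length_le_dim:
  fixes k :: nat and sg :: "nat \<Rightarrow> 'a \<Rightarrow> 'a"
  assumes K: "subfield K R" and E: "subfield E R" and KE: "K \<subseteq> E" and dim: "dimension n K E"
    and emb: "\<And>j. j < k \<Longrightarrow> embedding_over R K E (sg j)"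
    and dist: "\<And>i j. i < k \<Longrightarrow> j < k \<Longrightarrow> i \<noteq> j \<Longrightarrow> \<exists>t\<in>E. sg i t \<noteq> sg j t"
  shows "k \<le> n"
proof (rule ccontr)
  assume "\<not> k \<le> n"
  then have card: "card {..<n} < card {..<k}" by simp
  have hom: "\<And>j. j < k \<Longrightarrow> sg j \<in> ring_hom (R\<lparr>carrier := E\<rparr>) R"
    using emb by (simp add: embedding_over_def)
  note sgE = subfield_homE[OF E hom]
  obtain Us where Us: "set Us \<subseteq> carrier R" "length Us = n" "Span K Us = E"
    using exists_base[OF K dim] by blast
  have UsE: "set Us \<subseteq> E" using Span_base_incl[OF K Us(1)] Us(3) by simp
  obtain x where x: "\<And>j. j \<in> {..<k} \<Longrightarrow> x j \<in> carrier R" "\<exists>j\<in>{..<k}. x j \<noteq> \<zero>"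
    and sol: "\<And>i. i \<in> {..<n} \<Longrightarrow> (\<Oplus>j\<in>{..<k}. sg j (Us ! i) \<otimes> x j) = \<zero>"
  proof (rule homogeneous_system_nontrivial_solution[where a = "\<lambda>i j. sg j (Us ! i)",
        OF carrier_is_subfield finite_lessThan finite_lessThan card])
    show "sg j (Us ! i) \<in> carrier R" if "i \<in> {..<n}" "j \<in> {..<k}" for i j
      using sgE(1) UsE Us(2) that nth_mem by (metis lessThan_iff subsetD)
  next
    fix x assume "\<And>j. j \<in> {..<k} \<Longrightarrow> x j \<in> carrier R" "\<exists>j\<in>{..<k}. x j \<noteq> \<zero>"
      "\<And>i. i \<in> {..<n} \<Longrightarrow> (\<Oplus>j\<in>{..<k}. sg j (Us ! i) \<otimes> x j) = \<zero>"
    then show thesis by (rule that)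
  qed
  have xC: "x j \<in> carrier R" if "j < k" for j using x(1) that by simp
  have "(\<Oplus>j\<in>{..<k}. x j \<otimes> sg j u) = \<zero>" if u: "u \<in> set Us" for u
  proof -
    obtain i where i: "i < n" "u = Us ! i" using u Us(2) by (metis in_set_conv_nth)
    have uE: "u \<in> E" using u UsE by blast
    have "(\<Oplus>j\<in>{..<k}. x j \<otimes> sg j u) = (\<Oplus>j\<in>{..<k}. sg j u \<otimes> x j)"
    proof (rule finsum_cong')
      fix j assume "j \<in> {..<k}"
      then show "x j \<otimes> sg j u = sg j u \<otimes> x j" using xC sgE(1) uE by (simp add: m_comm)
    qed (use xC sgE(1) uE in auto)
    then show ?thesis using sol i by simp
  qed
  then have rel: "(\<Oplus>j\<in>{..<k}. x j \<otimes> sg j v) = \<zero>" if "v \<in> E" for v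
    using embedding_relation_on_Span[where k = k and sg = sg and x = x, OF K E KE emb xC UsE] that Us(3)
    by blast
  have "x j = \<zero>" if "j < k" for j
    using embeddings_linearly_independent[where k = k and sg = sg and x = x, OF E hom dist xC rel that] .
  then show False using x(2) by simp
qed

lemma card_embeddings_le_dim:
  assumes K: "subfield K R" and E: "subfield E R" and KE: "K \<subseteq> E" and dim: "dimension n K E"
    and emb: "\<And>s. s \<in> S \<Longrightarrow> embedding_over R K E s"
    and inj: "inj_on (\<lambda>s. restrict s E) S"
  shows "finite S" and "card S \<le> n"
proof -
  have le: "card T \<le> n" if T: "finite T" "T \<subseteq> S" for T
  proof -
    obtain h where h: "bij_betw h {0..<card T} T" using ex_bij_betw_nat_finite[OF T(1)] by blast
    have hS: "h j \<in> S" if "j < card T" for j using bij_betwE[OF h] T(2) that by auto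
    show ?thesis
    proof (rule embedding_family_length_le_dim[where k = "card T" and sg = h, OF K E KE dim])
      show "embedding_over R K E (h j)" if "j < card T" for j using emb hS that by blast
      show "\<exists>t\<in>E. h i t \<noteq> h j t" if ij: "i < card T" "j < card T" "i \<noteq> j" for i j
      proof (rule ccontr)
        assume "\<not> (\<exists>t\<in>E. h i t \<noteq> h j t)"
        then have "restrict (h i) E = restrict (h j) E" by (auto intro: restrict_ext)
        then have "h i = h j" using inj hS ij(1,2) by (auto dest: inj_onD)
        then show False using bij_betw_imp_inj_on[OF h] ij by (auto dest: inj_onD)
      qed
    qed
  qed
  show "finite S"
  proof (rule ccontr)
    assume "infinite S"
    then obtain T where "finite T" "card T = Suc n" "T \<subseteq> S" using infinite_arbitrarily_large by blast
    then show False using le[of T] by simp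
  qed
  then show "card S \<le> n" using le by blast
qed

end

section \<open>Galois groups and fixed fields\<close>

definition fixed_field :: "'a set \<Rightarrow> ('a \<Rightarrow> 'a) set \<Rightarrow> 'a set"
  where "fixed_field M H = {x \<in> M. \<forall>h\<in>H. h x = x}"

lemma carrier_Gal:
  "carrier (Gal R K M) =
     {s \<in> Bij M. s \<in> ring_hom (R\<lparr>carrier := M\<rparr>) (R\<lparr>carrier := M\<rparr>) \<and> (\<forall>k\<in>K. s k = k)}"
  by (simp add: Gal_def BijGroup_def)

lemma mult_Gal:
  "s \<in> carrier (Gal R K M) \<Longrightarrow> t \<in> carrier (Gal R K M) \<Longrightarrow> s \<otimes>\<^bsub>Gal R K M\<^esub> t = compose M s t"
  by (simp add: Gal_def BijGroup_def)

lemma one_Gal: "\<one>\<^bsub>Gal R K M\<^esub> = (\<lambda>x\<in>M. x)"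
  by (simp add: Gal_def BijGroup_def)

lemma Gal_apply_mult:
  "s \<in> carrier (Gal R K M) \<Longrightarrow> t \<in> carrier (Gal R K M) \<Longrightarrow> x \<in> M \<Longrightarrow> (s \<otimes>\<^bsub>Gal R K M\<^esub> t) x = s (t x)"
  by (simp add: mult_Gal compose_def)

lemma Gal_ext:
  assumes "s \<in> carrier (Gal R K M)" "t \<in> carrier (Gal R K M)" "\<And>x. x \<in> M \<Longrightarrow> s x = t x"
  shows "s = t"
  using assms by (intro extensionalityI[of s M t]) (auto simp: carrier_Gal Bij_def)

lemma Gal_antimono: "K \<subseteq> E \<Longrightarrow> carrier (Gal R E M) \<subseteq> carrier (Gal R K M)"
  by (auto simp: carrier_Gal)

lemma carrier_Gal_intermediate:
  "K \<subseteq> E \<Longrightarrow> carrier (Gal R E M) = {s \<in> carrier (Gal R K M). \<forall>x\<in>E. s x = x}"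
  by (auto simp: carrier_Gal)

context field
begin

lemma ring_hom_onI:
  assumes "\<And>x. x \<in> M \<Longrightarrow> s x \<in> M"
    and "\<And>x y. x \<in> M \<Longrightarrow> y \<in> M \<Longrightarrow> s (x \<otimes> y) = s x \<otimes> s y"
    and "\<And>x y. x \<in> M \<Longrightarrow> y \<in> M \<Longrightarrow> s (x \<oplus> y) = s x \<oplus> s y"
    and "s \<one> = \<one>"
  shows "s \<in> ring_hom (R\<lparr>carrier := M\<rparr>) (R\<lparr>carrier := M\<rparr>)"
  using assms by (auto simp: ring_hom_def)

lemma ring_hom_onD:
  assumes "s \<in> ring_hom (R\<lparr>carrier := M\<rparr>) (R\<lparr>carrier := M\<rparr>)"
  shows "\<And>x. x \<in> M \<Longrightarrow> s x \<in> M"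
    and "\<And>x y. x \<in> M \<Longrightarrow> y \<in> M \<Longrightarrow> s (x \<otimes> y) = s x \<otimes> s y"
    and "\<And>x y. x \<in> M \<Longrightarrow> y \<in> M \<Longrightarrow> s (x \<oplus> y) = s x \<oplus> s y"
    and "s \<one> = \<one>"
  using assms by (auto simp: ring_hom_def)

lemma Gal_ring_hom:
  assumes M: "subfield M R" and s: "s \<in> carrier (Gal R K M)"
  shows "s \<in> ring_hom (R\<lparr>carrier := M\<rparr>) R"
proof -
  have h: "s \<in> ring_hom (R\<lparr>carrier := M\<rparr>) (R\<lparr>carrier := M\<rparr>)" using s by (simp add: carrier_Gal)
  show ?thesis
    using ring_hom_onD[OF h] subfieldE(3)[OF M] by (intro ring_hom_memI) auto
qed

lemma Gal_embedding:
  "subfield M R \<Longrightarrow> s \<in> carrier (Gal R K M) \<Longrightarrow> embedding_over R K M s"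
  using Gal_ring_hom by (auto simp: carrier_Gal embedding_over_def)

lemma Gal_closed: "s \<in> carrier (Gal R K M) \<Longrightarrow> x \<in> M \<Longrightarrow> s x \<in> M"
  using ring_hom_onD(1) by (auto simp: carrier_Gal)

lemma inv_into_ring_hom_on:
  assumes M: "subfield M R" and s: "s \<in> Bij M" "s \<in> ring_hom (R\<lparr>carrier := M\<rparr>) (R\<lparr>carrier := M\<rparr>)"
  shows "(\<lambda>x\<in>M. inv_into M s x) \<in> ring_hom (R\<lparr>carrier := M\<rparr>) (R\<lparr>carrier := M\<rparr>)"
proof -
  note Mp = subringE[OF subfieldE(1)[OF M]]
  have bij: "bij_betw s M M" using s(1) by (simp add: Bij_def)
  have ii: "\<And>x. x \<in> M \<Longrightarrow> inv_into M s x \<in> M" and fi: "\<And>x. x \<in> M \<Longrightarrow> s (inv_into M s x) = x"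
    and if': "\<And>x. x \<in> M \<Longrightarrow> inv_into M s (s x) = x"
    using bij by (auto simp: bij_betw_def inv_into_into f_inv_into_f inv_into_f_f)
  note hs = ring_hom_onD[OF s(2)]
  show ?thesis
  proof (rule ring_hom_onI)
    fix x y assume xy: "x \<in> M" "y \<in> M"
    have "inv_into M s (x \<otimes> y) = inv_into M s (s (inv_into M s x \<otimes> inv_into M s y))"
      using hs(2) ii fi xy by simp
    then show "(\<lambda>x\<in>M. inv_into M s x) (x \<otimes> y) = (\<lambda>x\<in>M. inv_into M s x) x \<otimes> (\<lambda>x\<in>M. inv_into M s x) y"
      using if' Mp(6) ii xy by simp
    have "inv_into M s (x \<oplus> y) = inv_into M s (s (inv_into M s x \<oplus> inv_into M s y))"
      using hs(3) ii fi xy by simp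
    then show "(\<lambda>x\<in>M. inv_into M s x) (x \<oplus> y) = (\<lambda>x\<in>M. inv_into M s x) x \<oplus> (\<lambda>x\<in>M. inv_into M s x) y"
      using if' Mp(7) ii xy by simp
  qed (use ii if'[of \<one>] hs(4) Mp(3) in auto)
qed

lemma Gal_subgroup_BijGroup:
  assumes M: "subfield M R" and KM: "K \<subseteq> M"
  shows "subgroup (carrier (Gal R K M)) (BijGroup M)"
proof (rule group.subgroupI[OF group_BijGroup])
  note Mp = subringE[OF subfieldE(1)[OF M]]
  show "carrier (Gal R K M) \<subseteq> carrier (BijGroup M)" by (auto simp: carrier_Gal BijGroup_def)
  have "(\<lambda>x\<in>M. x) \<in> carrier (Gal R K M)"
    using KM id_Bij by (auto simp: carrier_Gal intro!: ring_hom_onI Mp)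
  then show "carrier (Gal R K M) \<noteq> {}" by blast
next
  fix s assume s: "s \<in> carrier (Gal R K M)"
  then have sB: "s \<in> Bij M" and sh: "s \<in> ring_hom (R\<lparr>carrier := M\<rparr>) (R\<lparr>carrier := M\<rparr>)"
    and sK: "\<forall>k\<in>K. s k = k" by (auto simp: carrier_Gal)
  have inj: "inj_on s M" using sB unfolding Bij_def by (blast dest: bij_betw_imp_inj_on)
  have "\<forall>k\<in>K. (\<lambda>x\<in>M. inv_into M s x) k = k"
    using sK KM inj by (metis inv_into_f_f restrict_apply' subsetD)
  then show "inv\<^bsub>BijGroup M\<^esub> s \<in> carrier (Gal R K M)"
    using inv_BijGroup[OF sB] restrict_inv_into_Bij[OF sB] inv_into_ring_hom_on[OF M sB sh]
    by (auto simp: carrier_Gal)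
next
  fix s t assume st: "s \<in> carrier (Gal R K M)" "t \<in> carrier (Gal R K M)"
  then have B: "s \<in> Bij M" "t \<in> Bij M" by (auto simp: carrier_Gal)
  note Mp = subringE[OF subfieldE(1)[OF M]]
  have "compose M s t \<in> ring_hom (R\<lparr>carrier := M\<rparr>) (R\<lparr>carrier := M\<rparr>)"
    using st ring_hom_onD[of s M] ring_hom_onD[of t M]
    by (intro ring_hom_onI) (auto simp: carrier_Gal compose_def Mp)
  moreover have "\<forall>k\<in>K. compose M s t k = k" using st KM by (auto simp: carrier_Gal compose_def)
  ultimately show "s \<otimes>\<^bsub>BijGroup M\<^esub> t \<in> carrier (Gal R K M)"
    using B compose_Bij by (simp add: carrier_Gal BijGroup_def)
qed

lemma Gal_group: "subfield M R \<Longrightarrow> K \<subseteq> M \<Longrightarrow> group (Gal R K M)"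
  using subgroup.subgroup_is_group[OF Gal_subgroup_BijGroup group_BijGroup]
  by (simp add: Gal_def)

lemma inv_Gal:
  assumes M: "subfield M R" and KM: "K \<subseteq> M" and s: "s \<in> carrier (Gal R K M)"
  shows "inv\<^bsub>Gal R K M\<^esub> s = (\<lambda>x\<in>M. inv_into M s x)"
proof -
  have "inv\<^bsub>Gal R K M\<^esub> s = inv\<^bsub>BijGroup M\<^esub> s"
    using group.m_inv_consistent[OF group_BijGroup Gal_subgroup_BijGroup[OF M KM] s]
    by (simp add: Gal_def)
  also have "\<dots> = (\<lambda>x\<in>M. inv_into M s x)" using s inv_BijGroup by (auto simp: carrier_Gal)
  finally show ?thesis .
qed

lemma Gal_apply_inv:
  assumes M: "subfield M R" and KM: "K \<subseteq> M" and s: "s \<in> carrier (Gal R K M)" and x: "x \<in> M"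
  shows "s ((inv\<^bsub>Gal R K M\<^esub> s) x) = x" and "(inv\<^bsub>Gal R K M\<^esub> s) (s x) = x"
proof -
  have bij: "bij_betw s M M" using s by (simp add: carrier_Gal Bij_def)
  show "s ((inv\<^bsub>Gal R K M\<^esub> s) x) = x"
    using inv_Gal[OF M KM s] x bij_betw_imp_surj_on[OF bij] by (simp add: f_inv_into_f)
  show "(inv\<^bsub>Gal R K M\<^esub> s) (s x) = x"
    using inv_Gal[OF M KM s] x Gal_closed[OF s x] bij_betw_imp_inj_on[OF bij] by (simp add: inv_into_f_f)
qed

lemma Gal_eq_one:
  assumes M: "subfield M R" and KM: "K \<subseteq> M" and u: "u \<in> carrier (Gal R K M)"
    and fix_M: "\<And>x. x \<in> M \<Longrightarrow> u x = x"
  shows "u = \<one>\<^bsub>Gal R K M\<^esub>"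
  using Gal_ext[OF u monoid.one_closed[OF group.is_monoid[OF Gal_group[OF M KM]]]] fix_M by (simp add: one_Gal)

lemma Gal_intermediate_subgroup:
  assumes M: "subfield M R" and KE: "K \<subseteq> E" and EM: "E \<subseteq> M"
  shows "subgroup (carrier (Gal R E M)) (Gal R K M)"
proof (rule group.subgroupI[OF Gal_group[OF M]])
  show "K \<subseteq> M" using KE EM by blast
  show "carrier (Gal R E M) \<subseteq> carrier (Gal R K M)" using Gal_antimono[OF KE] .
  show "carrier (Gal R E M) \<noteq> {}" using monoid.one_closed[OF group.is_monoid[OF Gal_group[OF M EM]]] by blast
next
  fix s assume s: "s \<in> carrier (Gal R E M)"
  have "inv\<^bsub>Gal R K M\<^esub> s = inv\<^bsub>Gal R E M\<^esub> s"
    using inv_Gal[OF M _ s] inv_Gal[OF M _ Gal_antimono[OF KE, THEN subsetD, OF s]] KE EM by simp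
  then show "inv\<^bsub>Gal R K M\<^esub> s \<in> carrier (Gal R E M)"
    using group.inv_closed[OF Gal_group[OF M EM] s] by simp
next
  fix s t assume st: "s \<in> carrier (Gal R E M)" "t \<in> carrier (Gal R E M)"
  moreover have "s \<in> carrier (Gal R K M)" "t \<in> carrier (Gal R K M)" using st Gal_antimono[OF KE] by auto
  ultimately have "s \<otimes>\<^bsub>Gal R K M\<^esub> t = s \<otimes>\<^bsub>Gal R E M\<^esub> t" by (simp add: mult_Gal)
  then show "s \<otimes>\<^bsub>Gal R K M\<^esub> t \<in> carrier (Gal R E M)"
    using monoid.m_closed[OF group.is_monoid[OF Gal_group[OF M EM]] st] by simp
qed

lemma fixed_field_subfield:
  assumes M: "subfield M R" and K: "subfield K R" and KM: "K \<subseteq> M"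
    and H: "H \<subseteq> carrier (Gal R K M)"
  shows "subfield (fixed_field M H) R" and "K \<subseteq> fixed_field M H" and "fixed_field M H \<subseteq> M"
proof -
  note Mp = subringE[OF subfieldE(1)[OF M]]
  have hE: "\<And>h. h \<in> H \<Longrightarrow> h \<in> ring_hom (R\<lparr>carrier := M\<rparr>) R" using H Gal_ring_hom[OF M] by blast
  note hom = subfield_homE[OF M hE]
  show "K \<subseteq> fixed_field M H" using H KM by (auto simp: carrier_Gal fixed_field_def)
  show "fixed_field M H \<subseteq> M" by (auto simp: fixed_field_def)
  show "subfield (fixed_field M H) R"
  proof (rule subfieldI')
    show "subring (fixed_field M H) R"
    proof (rule subringI)
      show "fixed_field M H \<subseteq> carrier R" using Mp(1) by (auto simp: fixed_field_def)
      show "\<one> \<in> fixed_field M H" using Mp(3) hom(4) by (simp add: fixed_field_def)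
    next
      fix x assume "x \<in> fixed_field M H"
      then have xM: "x \<in> M" and fx: "\<And>h. h \<in> H \<Longrightarrow> h x = x" by (auto simp: fixed_field_def)
      have "h (\<ominus> x) = \<ominus> x" if "h \<in> H" for h using hom(6)[OF that xM] fx[OF that] by simp
      then show "\<ominus> x \<in> fixed_field M H" using Mp(5)[OF xM] by (simp add: fixed_field_def)
    next
      fix x y assume "x \<in> fixed_field M H" "y \<in> fixed_field M H"
      then have xy: "x \<in> M" "y \<in> M" and fxy: "\<And>h. h \<in> H \<Longrightarrow> h x = x" "\<And>h. h \<in> H \<Longrightarrow> h y = y"
        by (auto simp: fixed_field_def)
      have "h (x \<otimes> y) = x \<otimes> y" "h (x \<oplus> y) = x \<oplus> y" if "h \<in> H" for h
        using hom(2,3)[OF that xy] fxy[OF that] by simp_all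
      then show "x \<otimes> y \<in> fixed_field M H" and "x \<oplus> y \<in> fixed_field M H"
        using Mp(6,7)[OF xy] by (simp_all add: fixed_field_def)
    qed
  next
    fix k assume k: "k \<in> fixed_field M H - {\<zero>}"
    then have kM: "k \<in> M" "k \<noteq> \<zero>" by (auto simp: fixed_field_def)
    have ik: "inv k \<in> M" "k \<otimes> inv k = \<one>" using subfield_m_inv[OF M, of k] kM by auto
    have "h (inv k) = inv k" if h: "h \<in> H" for h
    proof -
      have "h k = k" using k h by (simp add: fixed_field_def)
      then have "k \<otimes> h (inv k) = \<one>"
        using hom(3)[OF h kM(1) ik(1)] ik(2) hom(4)[OF h] by simp
      then show ?thesis
        using ik kM hom(1)[OF h ik(1)] subfieldE(3)[OF M] by (metis inv_char m_comm subsetD)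
    qed
    then show "inv k \<in> fixed_field M H" using ik by (auto simp: fixed_field_def)
  qed
qed

lemma Gal_stable_imp_normal:
  assumes M: "subfield M R" and KE: "K \<subseteq> E" and EM: "E \<subseteq> M"
    and stable: "\<And>s x. s \<in> carrier (Gal R K M) \<Longrightarrow> x \<in> E \<Longrightarrow> s x \<in> E"
  shows "carrier (Gal R E M) \<lhd> Gal R K M"
proof -
  have KM: "K \<subseteq> M" using KE EM by blast
  interpret G: group "Gal R K M" using Gal_group[OF M KM] .
  show ?thesis
    unfolding G.normal_inv_iff
  proof (intro conjI ballI Gal_intermediate_subgroup[OF M KE EM])
    fix s h assume s: "s \<in> carrier (Gal R K M)" and h: "h \<in> carrier (Gal R E M)"
    have hG: "h \<in> carrier (Gal R K M)" using h Gal_antimono[OF KE] by blast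
    have iG: "inv\<^bsub>Gal R K M\<^esub> s \<in> carrier (Gal R K M)" using s by simp
    have "(s \<otimes>\<^bsub>Gal R K M\<^esub> h \<otimes>\<^bsub>Gal R K M\<^esub> inv\<^bsub>Gal R K M\<^esub> s) x = x" if x: "x \<in> E" for x
    proof -
      have xM: "x \<in> M" using x EM by blast
      have "(inv\<^bsub>Gal R K M\<^esub> s) x \<in> E" using stable[OF iG x] .
      then have "h ((inv\<^bsub>Gal R K M\<^esub> s) x) = (inv\<^bsub>Gal R K M\<^esub> s) x" using h by (auto simp: carrier_Gal)
      then show ?thesis
        using Gal_apply_mult[OF G.m_closed[OF s hG] iG xM] Gal_apply_mult[OF s hG]
          Gal_closed[OF iG xM] Gal_apply_inv(1)[OF M KM s xM] by simp
    qed
    then show "s \<otimes>\<^bsub>Gal R K M\<^esub> h \<otimes>\<^bsub>Gal R K M\<^esub> inv\<^bsub>Gal R K M\<^esub> s \<in> carrier (Gal R E M)"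
      using carrier_Gal_intermediate[OF KE, of R M] s hG iG by auto
  qed
qed

lemma fixed_field_normal_stable:
  assumes M: "subfield M R" and KM: "K \<subseteq> M" and H: "H \<lhd> Gal R K M"
    and s: "s \<in> carrier (Gal R K M)" and x: "x \<in> fixed_field M H"
  shows "s x \<in> fixed_field M H"
proof -
  interpret G: group "Gal R K M" using Gal_group[OF M KM] .
  have HG: "H \<subseteq> carrier (Gal R K M)" using H by (simp add: normal_def subgroup.subset)
  have xM: "x \<in> M" and xf: "\<And>h. h \<in> H \<Longrightarrow> h x = x" using x by (auto simp: fixed_field_def)
  have "h (s x) = s x" if h: "h \<in> H" for h
  proof -
    have hG: "h \<in> carrier (Gal R K M)" using h HG by blast
    define h' where "h' = inv\<^bsub>Gal R K M\<^esub> s \<otimes>\<^bsub>Gal R K M\<^esub> h \<otimes>\<^bsub>Gal R K M\<^esub> s"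
    have "\<forall>x\<in>carrier (Gal R K M). \<forall>h\<in>H. x \<otimes>\<^bsub>Gal R K M\<^esub> h \<otimes>\<^bsub>Gal R K M\<^esub> inv\<^bsub>Gal R K M\<^esub> x \<in> H"
      using H by (simp add: G.normal_inv_iff)
    then have "inv\<^bsub>Gal R K M\<^esub> s \<otimes>\<^bsub>Gal R K M\<^esub> h \<otimes>\<^bsub>Gal R K M\<^esub> inv\<^bsub>Gal R K M\<^esub> (inv\<^bsub>Gal R K M\<^esub> s) \<in> H"
      using G.inv_closed[OF s] h by blast
    then have h'H: "h' \<in> H" using s by (simp add: h'_def)
    have "s \<otimes>\<^bsub>Gal R K M\<^esub> h' = h \<otimes>\<^bsub>Gal R K M\<^esub> s"
      using s hG by (simp add: h'_def G.m_assoc[symmetric])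
    moreover have "h' \<in> carrier (Gal R K M)" using h'H HG by blast
    ultimately have "s (h' x) = h (s x)"
      using Gal_apply_mult[OF s _ xM] Gal_apply_mult[OF hG s xM] by metis
    then show ?thesis using xf[OF h'H] by simp
  qed
  then show ?thesis using Gal_closed[OF s xM] by (auto simp: fixed_field_def)
qed

lemma Gal_fixes_generate_field:
  assumes K: "subfield K R" and M: "subfield M R" and KM: "K \<subseteq> M"
    and s: "s \<in> carrier (Gal R K M)" and A: "A \<subseteq> M" and fix_A: "\<And>x. x \<in> A \<Longrightarrow> s x = x"
    and x: "x \<in> generate_field R A"
  shows "s x = x"
proof -
  note F = fixed_field_subfield[OF M K KM, of "{s}"]
  have "A \<subseteq> fixed_field M {s}" using A fix_A by (auto simp: fixed_field_def)
  then have "generate_field R A \<subseteq> fixed_field M {s}"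
    using generate_field_min_subfield1[OF _ F(1)] A subfieldE(3)[OF M] s by blast
  then show ?thesis using x by (auto simp: fixed_field_def)
qed

end

section \<open>Artin's lemma\<close>

context field
begin

lemma Gal_relation_stable:
  assumes M: "subfield M R" and KM: "K \<subseteq> M" and H: "subgroup H (Gal R K M)"
    and g: "g \<in> H" and us: "set us \<subseteq> M" and x: "\<And>j. j < length us \<Longrightarrow> x j \<in> M"
    and rel: "\<And>h. h \<in> H \<Longrightarrow> (\<Oplus>j\<in>{..<length us}. x j \<otimes> h (us ! j)) = \<zero>"
    and h: "h \<in> H"
  shows "(\<Oplus>j\<in>{..<length us}. g (x j) \<otimes> h (us ! j)) = \<zero>"
proof -
  interpret G: group "Gal R K M" using Gal_group[OF M KM] .
  have HG: "H \<subseteq> carrier (Gal R K M)" using subgroup.subset[OF H] .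
  have gG: "g \<in> carrier (Gal R K M)" and hG: "h \<in> carrier (Gal R K M)" using g h HG by auto
  define h' where "h' = inv\<^bsub>Gal R K M\<^esub> g \<otimes>\<^bsub>Gal R K M\<^esub> h"
  have h'H: "h' \<in> H"
    unfolding h'_def using subgroup.m_closed[OF H subgroup.m_inv_closed[OF H g] h] .
  have h'G: "h' \<in> carrier (Gal R K M)" using h'H HG by blast
  have "g \<otimes>\<^bsub>Gal R K M\<^esub> h' = h" using gG hG by (simp add: h'_def G.m_assoc[symmetric])
  then have gh': "g (h' v) = h v" if "v \<in> M" for v using Gal_apply_mult[OF gG h'G that] by simp
  have uM: "us ! j \<in> M" if "j < length us" for j using us that nth_mem by blast
  have "(\<Oplus>j\<in>{..<length us}. g (x j) \<otimes> g (h' (us ! j))) = \<zero>"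
    using subfield_hom_relation[OF M Gal_ring_hom[OF M gG] x _ rel[OF h'H]] Gal_closed[OF h'G] uM by blast
  moreover have "(\<Oplus>j\<in>{..<length us}. g (x j) \<otimes> g (h' (us ! j))) = (\<Oplus>j\<in>{..<length us}. g (x j) \<otimes> h (us ! j))"
    using gh' uM x Gal_closed[OF gG] Gal_closed[OF hG] subfieldE(3)[OF M]
    by (intro finsum_cong') (auto intro!: m_closed)
  ultimately show ?thesis by simp
qed

lemma exists_Gal_relation:
  assumes M: "subfield M R" and H: "H \<subseteq> carrier (Gal R K M)" and fin: "finite H"
    and us: "set us \<subseteq> M" and len: "card H < length us"
  obtains w l where "\<And>j. j < length us \<Longrightarrow> w j \<in> M" and "l < length us" and "w l \<noteq> \<zero>"
    and "\<And>h. h \<in> H \<Longrightarrow> (\<Oplus>j\<in>{..<length us}. w j \<otimes> h (us ! j)) = \<zero>"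
proof -
  have card: "card {..<card H} < card {..<length us}" using len by simp
  have hM: "h (us ! j) \<in> M" if "h \<in> H" "j < length us" for h j
    using Gal_closed H us that nth_mem by blast
  obtain hs where hs: "bij_betw hs {..<card H} H"
    using ex_bij_betw_nat_finite[OF fin] atLeast0LessThan by metis
  obtain w where w: "\<And>j. j \<in> {..<length us} \<Longrightarrow> w j \<in> M" "\<exists>j\<in>{..<length us}. w j \<noteq> \<zero>"
    and sol: "\<And>i. i \<in> {..<card H} \<Longrightarrow> (\<Oplus>j\<in>{..<length us}. hs i (us ! j) \<otimes> w j) = \<zero>"
  proof (rule homogeneous_system_nontrivial_solution[where a = "\<lambda>i j. hs i (us ! j)",
        OF M finite_lessThan finite_lessThan card])
    show "hs i (us ! j) \<in> M" if "i \<in> {..<card H}" "j \<in> {..<length us}" for i j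
      using hM bij_betwE[OF hs] that by simp
  next
    fix x assume "\<And>j. j \<in> {..<length us} \<Longrightarrow> x j \<in> M" "\<exists>j\<in>{..<length us}. x j \<noteq> \<zero>"
      "\<And>i. i \<in> {..<card H} \<Longrightarrow> (\<Oplus>j\<in>{..<length us}. hs i (us ! j) \<otimes> x j) = \<zero>"
    then show thesis by (rule that)
  qed
  have "(\<Oplus>j\<in>{..<length us}. w j \<otimes> h (us ! j)) = \<zero>" if h: "h \<in> H" for h
  proof -
    obtain i where i: "i < card H" "h = hs i"
      using bij_betw_imp_surj_on[OF hs] h by (metis imageE lessThan_iff)
    have "(\<Oplus>j\<in>{..<length us}. w j \<otimes> h (us ! j)) = (\<Oplus>j\<in>{..<length us}. h (us ! j) \<otimes> w j)"
    proof (rule finsum_cong')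
      fix j assume "j \<in> {..<length us}"
      then show "w j \<otimes> h (us ! j) = h (us ! j) \<otimes> w j"
        using w(1) hM[OF h] subfieldE(3)[OF M] by (auto intro: m_comm)
    qed (use w(1) hM[OF h] subfieldE(3)[OF M] in auto)
    then show ?thesis using sol i by simp
  qed
  then show ?thesis using that w by auto
qed

lemma length_independent_over_fixed_field_le:
  assumes K: "subfield K R" and M: "subfield M R" and KM: "K \<subseteq> M"
    and H: "subgroup H (Gal R K M)" and fin: "finite H"
    and us: "set us \<subseteq> M" and ind: "independent (fixed_field M H) us"
  shows "length us \<le> card H"
proof (rule ccontr)
  assume "\<not> length us \<le> card H"
  have MC: "\<And>x. x \<in> M \<Longrightarrow> x \<in> carrier R" using subfieldE(3)[OF M] by blast
  note Mp = subringE[OF subfieldE(1)[OF M]]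
  have HG: "H \<subseteq> carrier (Gal R K M)" using subgroup.subset[OF H] .
  have hM: "\<And>h x. h \<in> H \<Longrightarrow> x \<in> M \<Longrightarrow> h x \<in> M" using Gal_closed HG by blast
  have uM: "\<And>j. j < length us \<Longrightarrow> us ! j \<in> M" using us nth_mem by blast
  define P where "P x \<longleftrightarrow> (\<forall>j<length us. x j \<in> M)
      \<and> (\<forall>h\<in>H. (\<Oplus>j\<in>{..<length us}. x j \<otimes> h (us ! j)) = \<zero>)" for x
  obtain w l where w: "\<And>j. j < length us \<Longrightarrow> w j \<in> M" "l < length us" "w l \<noteq> \<zero>"
    and rel: "\<And>h. h \<in> H \<Longrightarrow> (\<Oplus>j\<in>{..<length us}. w j \<otimes> h (us ! j)) = \<zero>"
    using exists_Gal_relation[OF M HG fin us] \<open>\<not> length us \<le> card H\<close> by (metis not_le)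
  obtain z a where z: "P z" "a < length us" "z a = \<one>"
    and fixed: "\<And>g j. g \<in> H \<Longrightarrow> j < length us \<Longrightarrow> g (z j) = z j"
  proof (rule exists_invariant_normalized_solution
      [where P = P and T = H and k = "length us" and w = w and l = l, OF M])
    show "x j \<in> M" if "P x" "j < length us" for x j using that by (simp add: P_def)
    show "P (\<lambda>j. c \<otimes> x j)" if c: "c \<in> M" and x: "P x" for c x
      using finsum_smult_left[of "{..<length us}" c] c x hM uM MC Mp(6) by (auto simp: P_def)
  next
    fix g x assume g: "g \<in> H" and x: "P x"
    have xM: "\<And>j. j < length us \<Longrightarrow> x j \<in> M" using x by (simp add: P_def)
    have "(\<Oplus>j\<in>{..<length us}. (x j \<ominus> g (x j)) \<otimes> h (us ! j)) = \<zero>" if h: "h \<in> H" for h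
      using finsum_diff_mult[of "{..<length us}" x "\<lambda>j. g (x j)" "\<lambda>j. h (us ! j)"]
        Gal_relation_stable[OF M KM H g us xM _ h] x h xM hM[OF g] hM[OF h] uM MC
      by (simp add: P_def)
    then show "P (\<lambda>j. x j \<ominus> g (x j))" using xM hM[OF g] Mp(5,7) by (auto simp: P_def a_minus_def)
  next
    show "g \<zero> = \<zero>" "g \<one> = \<one>" if "g \<in> H" for g
      using subfield_homE(4,5)[OF M Gal_ring_hom[OF M]] HG that by auto
    show "g x \<in> carrier R" if "g \<in> H" "x \<in> M" for g x using hM that MC by blast
    show "P w" using w(1) rel by (simp add: P_def)
    show "l < length us" "w l \<noteq> \<zero>" by (fact w(2,3))+
  next
    fix z a assume "P z" "a < length us" "z a = \<one>" "\<And>g j. g \<in> H \<Longrightarrow> j < length us \<Longrightarrow> g (z j) = z j"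
    then show thesis by (rule that)
  qed
  have zF: "z j \<in> fixed_field M H" if "j < length us" for j
    using z(1) fixed that by (auto simp: P_def fixed_field_def)
  have "(\<lambda>x\<in>M. x) \<in> H" using subgroup.one_closed[OF H] by (simp add: one_Gal)
  then have "(\<Oplus>j\<in>{..<length us}. z j \<otimes> (\<lambda>x\<in>M. x) (us ! j)) = \<zero>"
    using z(1) unfolding P_def by blast
  moreover have "(\<Oplus>j\<in>{..<length us}. z j \<otimes> (\<lambda>x\<in>M. x) (us ! j)) = (\<Oplus>j\<in>{..<length us}. z j \<otimes> us ! j)"
    using uM MC z(1) by (intro finsum_cong') (auto simp: P_def)
  ultimately have relz: "(\<Oplus>j\<in>{..<length us}. z j \<otimes> us ! j) = \<zero>" by simp
  have "z a = \<zero>"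
    using independent_finsum_eq_zero_imp[where x = z, OF fixed_field_subfield(1)[OF M K KM HG] ind zF relz z(2)] .
  then show False using z(3) by simp
qed

lemma dim_over_fixed_field_le:
  assumes K: "subfield K R" and M: "subfield M R" and KM: "K \<subseteq> M" and fd: "finite_dimension K M"
    and H: "subgroup H (Gal R K M)" and fin: "finite H"
  shows "finite_dimension (fixed_field M H) M" and "(dim over (fixed_field M H)) M \<le> card H"
proof -
  note F = fixed_field_subfield[OF M K KM subgroup.subset[OF H]]
  show fdF: "finite_dimension (fixed_field M H) M"
    using finite_dimension_intermediate[OF K F(1) M F(2,3) fd] .
  obtain us where us: "set us \<subseteq> carrier R" "independent (fixed_field M H) us"
      "length us = (dim over (fixed_field M H)) M" "Span (fixed_field M H) us = M"
    using exists_base[OF F(1) finite_dimensionE[OF F(1) fdF]] by blast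
  have "set us \<subseteq> M" using Span_base_incl[OF F(1) us(1)] us(4) by simp
  then show "(dim over (fixed_field M H)) M \<le> card H"
    using length_independent_over_fixed_field_le[OF K M KM H fin _ us(2)] us(3) by simp
qed

end

section \<open>The Galois correspondence\<close>

context field
begin

lemma galoisD:
  assumes "galois R K M"
  shows "subfield M R" and "K \<subseteq> M" and "finite_dimension K M"
    and "card (carrier (Gal R K M)) = (dim over K) M"
  using assms by (auto simp: galois_def finite_ext_def degree_ext_def over_def)

lemma finite_Gal:
  assumes K: "subfield K R" and gal: "galois R K M"
  shows "finite (carrier (Gal R K M))"
proof -
  have "0 < card (carrier (Gal R K M))"
    using galoisD[OF gal] dim_pos[OF K] by simp
  then show ?thesis using card_gt_0_iff by blast
qed

lemma Gal_restrict_eq_iff: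
  assumes M: "subfield M R" and KE: "K \<subseteq> E" and EM: "E \<subseteq> M"
    and s: "s \<in> carrier (Gal R K M)" and t: "t \<in> carrier (Gal R K M)"
  shows "restrict s E = restrict t E \<longleftrightarrow> inv\<^bsub>Gal R K M\<^esub> s \<otimes>\<^bsub>Gal R K M\<^esub> t \<in> carrier (Gal R E M)"
proof -
  have KM: "K \<subseteq> M" using KE EM by blast
  interpret G: group "Gal R K M" using Gal_group[OF M KM] .
  let ?u = "inv\<^bsub>Gal R K M\<^esub> s \<otimes>\<^bsub>Gal R K M\<^esub> t"
  have u: "?u \<in> carrier (Gal R K M)" using s t by simp
  have fixes_iff: "?u x = x \<longleftrightarrow> s x = t x" if x: "x \<in> M" for x
  proof -
    have "?u x = (inv\<^bsub>Gal R K M\<^esub> s) (t x)" using Gal_apply_mult[OF G.inv_closed[OF s] t x] .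
    moreover have "(inv\<^bsub>Gal R K M\<^esub> s) (t x) = x \<longleftrightarrow> t x = s x"
      using Gal_apply_inv[OF M KM s] Gal_closed[OF t x] x by metis
    ultimately show ?thesis by auto
  qed
  have "restrict s E = restrict t E \<longleftrightarrow> (\<forall>x\<in>E. s x = t x)"
    by (metis restrict_apply' restrict_ext)
  also have "\<dots> \<longleftrightarrow> (\<forall>x\<in>E. ?u x = x)" using fixes_iff EM by blast
  also have "\<dots> \<longleftrightarrow> ?u \<in> carrier (Gal R E M)" using carrier_Gal_intermediate[OF KE, of R M] u by blast
  finally show ?thesis .
qed

lemma card_Gal_le_dim:
  assumes K: "subfield K R" and E: "subfield E R" and KE: "K \<subseteq> E" and fd: "finite_dimension K E"
  shows "finite (carrier (Gal R K E))" and "card (carrier (Gal R K E)) \<le> (dim over K) E"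
proof -
  have "inj_on (\<lambda>s. restrict s E) (carrier (Gal R K E))"
    by (rule inj_onI) (auto simp: carrier_Gal Bij_def extensional_restrict)
  then show "finite (carrier (Gal R K E))" and "card (carrier (Gal R K E)) \<le> (dim over K) E"
    using card_embeddings_le_dim[OF K E KE finite_dimensionE[OF K fd]] Gal_embedding[OF E] by blast+
qed

lemma galois_card_Gal_intermediate:
  assumes K: "subfield K R" and gal: "galois R K M"
    and E: "subfield E R" and KE: "K \<subseteq> E" and EM: "E \<subseteq> M"
  shows "card (carrier (Gal R E M)) = (dim over E) M"
    and "card ((\<lambda>s. restrict s E) ` carrier (Gal R K M)) = (dim over K) E"
proof -
  note M = galoisD(1)[OF gal] and KM = galoisD(2)[OF gal]
  interpret G: group "Gal R K M" using Gal_group[OF M KM] .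
  note dims = finite_dimension_tower[OF K E M KE EM galoisD(3)[OF gal]]
  define H where "H = carrier (Gal R E M)"
  define I where "I = (\<lambda>s. restrict s E) ` carrier (Gal R K M)"
  have "card (carrier (Gal R K M)) = card I * card H"
    unfolding I_def H_def
    by (rule G.card_carrier_eq_card_image_mult[OF finite_Gal[OF K gal] Gal_intermediate_subgroup[OF M KE EM]])
      (rule Gal_restrict_eq_iff[OF M KE EM])
  then have prod: "card I * card H = (dim over K) E * (dim over E) M"
    using galoisD(4)[OF gal] dims(3) by simp
  have "card H \<le> (dim over E) M" using card_Gal_le_dim(2)[OF E M EM dims(2)] by (simp add: H_def)
  moreover have "card I \<le> (dim over K) E"
  proof (rule card_embeddings_le_dim(2)[OF K E KE finite_dimensionE[OF K dims(1)]])
    show "embedding_over R K E t" if "t \<in> I" for t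
      using that embedding_over_restrict[OF M E EM KE Gal_embedding[OF M]] by (auto simp: I_def)
    show "inj_on (\<lambda>s. restrict s E) I" by (rule inj_onI) (auto simp: I_def)
  qed
  ultimately show "card (carrier (Gal R E M)) = (dim over E) M"
    and "card ((\<lambda>s. restrict s E) ` carrier (Gal R K M)) = (dim over K) E"
    using mult_eq_mult_imp_eq[OF _ _ dim_pos[OF K E dims(1)] dim_pos[OF E M dims(2)] prod] by (simp_all add: H_def I_def)
qed

lemma fixed_field_Gal_eq:
  assumes K: "subfield K R" and gal: "galois R K M"
  shows "fixed_field M (carrier (Gal R K M)) = K"
proof -
  note M = galoisD(1)[OF gal] and KM = galoisD(2)[OF gal]
  define F where "F = fixed_field M (carrier (Gal R K M))"
  note F = fixed_field_subfield[OF M K KM subset_refl, folded F_def]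
  have "carrier (Gal R F M) = carrier (Gal R K M)"
    using carrier_Gal_intermediate[OF F(2), of R M] by (auto simp: F_def fixed_field_def)
  then have "(dim over F) M = (dim over K) M"
    using galois_card_Gal_intermediate(1)[OF K gal F] galoisD(4)[OF gal] by simp
  moreover note dims = finite_dimension_tower[OF K F(1) M F(2,3) galoisD(3)[OF gal]]
  ultimately have "(dim over K) F = 1" using dim_pos[OF F(1) M dims(2)] by simp
  then show ?thesis using dim_eq_one_imp_eq[OF K F(1) F(2) dims(1)] by (simp add: F_def)
qed

lemma Gal_fixed_field:
  assumes K: "subfield K R" and gal: "galois R K M" and H: "subgroup H (Gal R K M)"
  shows "carrier (Gal R (fixed_field M H) M) = H" and "(dim over (fixed_field M H)) M = card H"
proof -
  note M = galoisD(1)[OF gal] and KM = galoisD(2)[OF gal]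
  have HG: "H \<subseteq> carrier (Gal R K M)" using subgroup.subset[OF H] .
  note F = fixed_field_subfield[OF M K KM HG]
  have finG: "finite (carrier (Gal R (fixed_field M H) M))"
    using finite_Gal[OF K gal] Gal_antimono[OF F(2)] finite_subset by metis
  have sub: "H \<subseteq> carrier (Gal R (fixed_field M H) M)"
    using carrier_Gal_intermediate[OF F(2), of R M] HG by (auto simp: fixed_field_def)
  have "card (carrier (Gal R (fixed_field M H) M)) = (dim over (fixed_field M H)) M"
    using galois_card_Gal_intermediate(1)[OF K gal F] .
  also have "\<dots> \<le> card H"
    using dim_over_fixed_field_le(2)[OF K M KM galoisD(3)[OF gal] H] finite_subset[OF HG finite_Gal[OF K gal]] .
  finally have "card (carrier (Gal R (fixed_field M H) M)) \<le> card H" .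
  then show "carrier (Gal R (fixed_field M H) M) = H"
    using card_seteq[OF finG sub] by simp
  then show "(dim over (fixed_field M H)) M = card H"
    using galois_card_Gal_intermediate(1)[OF K gal F] by simp
qed

lemma galois_intermediate:
  assumes K: "subfield K R" and gal: "galois R K M"
    and E: "subfield E R" and KE: "K \<subseteq> E" and EM: "E \<subseteq> M"
  shows "galois R E M"
  using galois_card_Gal_intermediate(1)[OF assms] galoisD[OF gal] EM
    finite_dimension_tower(2)[OF K E galoisD(1)[OF gal] KE EM]
  by (simp add: galois_def finite_ext_def degree_ext_def over_def)

lemma restrict_Gal_mem_Gal:
  assumes M: "subfield M R" and E: "subfield E R" and KE: "K \<subseteq> E" and EM: "E \<subseteq> M"
    and stable: "\<And>s x. s \<in> carrier (Gal R K M) \<Longrightarrow> x \<in> E \<Longrightarrow> s x \<in> E"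
    and s: "s \<in> carrier (Gal R K M)"
  shows "restrict s E \<in> carrier (Gal R K E)"
proof -
  have KM: "K \<subseteq> M" using KE EM by blast
  interpret G: group "Gal R K M" using Gal_group[OF M KM] .
  note Ep = subringE[OF subfieldE(1)[OF E]]
  have sh: "s \<in> ring_hom (R\<lparr>carrier := M\<rparr>) (R\<lparr>carrier := M\<rparr>)" and sK: "\<forall>k\<in>K. s k = k"
    using s by (auto simp: carrier_Gal)
  have inj: "inj_on s M" using s by (auto simp: carrier_Gal Bij_def bij_betw_def)
  have "E \<subseteq> s ` E"
  proof
    fix y assume y: "y \<in> E"
    have "(inv\<^bsub>Gal R K M\<^esub> s) y \<in> E" using stable[OF G.inv_closed[OF s] y] .
    moreover have "s ((inv\<^bsub>Gal R K M\<^esub> s) y) = y" using Gal_apply_inv(1)[OF M KM s] y EM by blast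
    ultimately show "y \<in> s ` E" by force
  qed
  then have "bij_betw (restrict s E) E E"
    using stable[OF s] inj_on_subset[OF inj EM] by (auto simp: bij_betw_def inj_on_def image_def)
  moreover have "restrict s E \<in> ring_hom (R\<lparr>carrier := E\<rparr>) (R\<lparr>carrier := E\<rparr>)"
    using ring_hom_onD[OF sh] stable[OF s] EM Ep(3,6,7) by (intro ring_hom_onI) (auto simp: subset_iff)
  ultimately show ?thesis using sK KE by (auto simp: carrier_Gal Bij_def)
qed

lemma galois_if_Gal_stable:
  assumes K: "subfield K R" and gal: "galois R K M"
    and E: "subfield E R" and KE: "K \<subseteq> E" and EM: "E \<subseteq> M"
    and stable: "\<And>s x. s \<in> carrier (Gal R K M) \<Longrightarrow> x \<in> E \<Longrightarrow> s x \<in> E"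
  shows "galois R K E"
proof -
  note M = galoisD(1)[OF gal]
  note dims = finite_dimension_tower[OF K E M KE EM galoisD(3)[OF gal]]
  have "(\<lambda>s. restrict s E) ` carrier (Gal R K M) \<subseteq> carrier (Gal R K E)"
  proof (intro image_subsetI restrict_Gal_mem_Gal[OF M E KE EM])
    show "t x \<in> E" if "t \<in> carrier (Gal R K M)" "x \<in> E" for t x using stable[OF that] .
  qed
  then have "(dim over K) E \<le> card (carrier (Gal R K E))"
    using card_mono[OF card_Gal_le_dim(1)[OF K E KE dims(1)]]
      galois_card_Gal_intermediate(2)[OF K gal E KE EM] by metis
  then have "card (carrier (Gal R K E)) = (dim over K) E"
    using card_Gal_le_dim(2)[OF K E KE dims(1)] by simp
  then show ?thesis using E KE dims(1) by (simp add: galois_def finite_ext_def degree_ext_def over_def)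
qed

lemma embedding_extends_to_Gal:
  assumes K: "subfield K R" and gal: "galois R K N"
    and E: "subfield E R" and KE: "K \<subseteq> E" and EN: "E \<subseteq> N"
    and t: "embedding_over R K E t"
  obtains g where "g \<in> carrier (Gal R K N)" and "\<And>x. x \<in> E \<Longrightarrow> t x = g x"
proof (rule ccontr)
  assume no_ext: "\<not> thesis"
  note N = galoisD(1)[OF gal]
  note dims = finite_dimension_tower[OF K E N KE EN galoisD(3)[OF gal]]
  let ?I = "(\<lambda>s. restrict s E) ` carrier (Gal R K N)"
  have "restrict t E \<notin> ?I"
  proof
    assume "restrict t E \<in> ?I"
    then obtain g where "g \<in> carrier (Gal R K N)" "restrict t E = restrict g E" by blast
    then show False using no_ext that by (metis restrict_apply')
  qed
  moreover have "finite ?I" using finite_Gal[OF K gal] by simp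
  ultimately have "card (insert (restrict t E) ?I) = Suc ((dim over K) E)"
    using galois_card_Gal_intermediate(2)[OF K gal E KE EN] by simp
  moreover have "card (insert (restrict t E) ?I) \<le> (dim over K) E"
  proof (rule card_embeddings_le_dim(2)[OF K E KE finite_dimensionE[OF K dims(1)]])
    show "embedding_over R K E s" if "s \<in> insert (restrict t E) ?I" for s
      using that embedding_over_restrict[OF E E subset_refl KE t]
        embedding_over_restrict[OF N E EN KE Gal_embedding[OF N]] by auto
    show "inj_on (\<lambda>s. restrict s E) (insert (restrict t E) ?I)" by (rule inj_onI) auto
  qed
  ultimately show False by simp
qed

lemma Gal_maps_into_galois_subfield:
  assumes K: "subfield K R" and M: "subfield M R" and KM: "K \<subseteq> M" and galN: "galois R K N"
    and s: "s \<in> carrier (Gal R K M)" and x: "x \<in> N \<inter> M"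
  shows "s x \<in> N"
proof -
  define E where "E = \<Inter>{N, M}"
  have E: "subfield E R"
    unfolding E_def using galoisD(1)[OF galN] M by (intro subfield_Inter) auto
  have KE: "K \<subseteq> E" and EN: "E \<subseteq> N" and EM: "E \<subseteq> M" using galoisD(2)[OF galN] KM by (auto simp: E_def)
  obtain g where g: "g \<in> carrier (Gal R K N)" and ext: "\<And>y. y \<in> E \<Longrightarrow> restrict s E y = g y"
    using embedding_extends_to_Gal[OF K galN E KE EN
        embedding_over_restrict[OF M E EM KE Gal_embedding[OF M s]]] by blast
  have "x \<in> E" using x by (simp add: E_def)
  then show ?thesis using ext Gal_closed[OF g] EN by fastforce
qed

lemma galois_closure_galois:
  assumes K: "subfield K R" and gal: "galois R K M" and LM: "L \<subseteq> M"
    and L: "subfield L R" and KL: "K \<subseteq> L"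
  shows "L \<subseteq> galois_closure R K L" and "galois_closure R K L \<subseteq> M"
    and "galois R K (galois_closure R K L)"
proof -
  define \<N> where "\<N> = {N. galois R K N \<and> L \<subseteq> N}"
  have T: "galois_closure R K L = \<Inter>\<N>" by (simp add: galois_closure_def \<N>_def)
  have M\<N>: "M \<in> \<N>" using gal LM by (simp add: \<N>_def)
  show LT: "L \<subseteq> galois_closure R K L" and TM: "galois_closure R K L \<subseteq> M"
    using M\<N> by (auto simp: T \<N>_def)
  have "subfield (galois_closure R K L) R"
    using subfield_Inter[of \<N>] M\<N> galoisD(1) by (auto simp: T \<N>_def)
  then show "galois R K (galois_closure R K L)"
  proof (rule galois_if_Gal_stable[OF K gal _ _ TM])
    show "K \<subseteq> galois_closure R K L" using KL LT by blast
    show "s x \<in> galois_closure R K L" if "s \<in> carrier (Gal R K M)" "x \<in> galois_closure R K L" for s x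
      using Gal_maps_into_galois_subfield[OF K galoisD(1,2)[OF gal] _ that(1)] that(2) TM
      by (auto simp: T \<N>_def)
  qed
qed

lemma galois_closure_eq:
  assumes "galois R K L"
  shows "galois_closure R K L = L"
  using assms by (auto simp: galois_closure_def)

lemma Gal_compositum_inter:
  assumes K: "subfield K R" and M: "subfield M R" and KL: "K \<subseteq> L" and LM: "L \<subseteq> M"
    and KF: "K \<subseteq> F" and FM: "F \<subseteq> M" and LF: "generate_field R (L \<union> F) = M"
  shows "carrier (Gal R L M) \<inter> carrier (Gal R F M) = {\<one>\<^bsub>Gal R K M\<^esub>}"
proof
  have KM: "K \<subseteq> M" using KL LM by blast
  show "carrier (Gal R L M) \<inter> carrier (Gal R F M) \<subseteq> {\<one>\<^bsub>Gal R K M\<^esub>}"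
  proof
    fix u assume u: "u \<in> carrier (Gal R L M) \<inter> carrier (Gal R F M)"
    then have uG: "u \<in> carrier (Gal R K M)" using Gal_antimono[OF KL] by blast
    have "u x = x" if "x \<in> L \<union> F" for x using u that by (auto simp: carrier_Gal)
    then have "u x = x" if "x \<in> M" for x
      using Gal_fixes_generate_field[OF K M KM uG _ _ that[folded LF]] LM FM by blast
    then show "u \<in> {\<one>\<^bsub>Gal R K M\<^esub>}" using Gal_eq_one[OF M KM uG] by simp
  qed
  show "{\<one>\<^bsub>Gal R K M\<^esub>} \<subseteq> carrier (Gal R L M) \<inter> carrier (Gal R F M)"
    using monoid.one_closed[OF group.is_monoid[OF Gal_group[OF M LM]]]
      monoid.one_closed[OF group.is_monoid[OF Gal_group[OF M FM]]]
    by (simp add: one_Gal)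
qed

lemma Gal_apply_relation:
  assumes M: "subfield M R" and h: "h \<in> carrier (Gal R L M)" and us: "set us \<subseteq> L" and LM: "L \<subseteq> M"
    and x: "\<And>j. j < length us \<Longrightarrow> x j \<in> M"
    and rel: "(\<Oplus>j\<in>{..<length us}. x j \<otimes> us ! j) = \<zero>"
  shows "(\<Oplus>j\<in>{..<length us}. h (x j) \<otimes> us ! j) = \<zero>"
proof -
  have hR: "h \<in> ring_hom (R\<lparr>carrier := M\<rparr>) R" using Gal_ring_hom[OF M h] .
  have uL: "\<And>j. j < length us \<Longrightarrow> us ! j \<in> L" using us nth_mem by blast
  have "(\<Oplus>j\<in>{..<length us}. h (x j) \<otimes> h (us ! j)) = \<zero>"
    using subfield_hom_relation[OF M hR, of "length us" x "\<lambda>j. us ! j"] x uL LM rel by blast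
  moreover have "(\<Oplus>j\<in>{..<length us}. h (x j) \<otimes> h (us ! j)) = (\<Oplus>j\<in>{..<length us}. h (x j) \<otimes> us ! j)"
  proof -
    have "h (us ! j) = us ! j" "us ! j \<in> carrier R" "h (x j) \<in> carrier R" if "j < length us" for j
      using h uL[OF that] subfield_homE(1)[OF M hR x[OF that]] LM subfieldE(3)[OF M]
      by (auto simp: carrier_Gal)
    then show ?thesis by (intro finsum_cong') auto
  qed
  ultimately show ?thesis by simp
qed

lemma lin_disjoint_if_galois:
  assumes K: "subfield K R" and gal: "galois R K M"
    and L: "subfield L R" and KL: "K \<subseteq> L" and LM: "L \<subseteq> M"
    and galF: "galois R K F" and FM: "F \<subseteq> M" and LF: "L \<inter> F \<subseteq> K"
  shows "lin_disjoint R K L F"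
  unfolding lin_disjoint_def
proof (intro allI impI, elim conjE, rule ccontr)
  fix us assume us: "set us \<subseteq> L" and ind: "independent K us" and dep: "\<not> independent F us"
  note M = galoisD(1)[OF gal] and KM = galoisD(2)[OF gal]
  note F = galoisD(1,2)[OF galF]
  have FC: "\<And>x. x \<in> F \<Longrightarrow> x \<in> carrier R" using subfieldE(3)[OF F(1)] by blast
  have uL: "\<And>j. j < length us \<Longrightarrow> us ! j \<in> L" using us nth_mem by blast
  have uC: "\<And>j. j < length us \<Longrightarrow> us ! j \<in> carrier R" using uL LM subfieldE(3)[OF M] by blast
  have usC: "set us \<subseteq> carrier R" using us LM subfieldE(3)[OF M] by blast
  let ?H = "carrier (Gal R L M)"
  have HG: "?H \<subseteq> carrier (Gal R K M)" using Gal_antimono[OF KL] .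
  have F_stable: "h x \<in> F" if "h \<in> ?H" "x \<in> F" for h x
    using Gal_maps_into_galois_subfield[OF K M KM galF] HG that FM by blast
  define P where "P x \<longleftrightarrow> (\<forall>j<length us. x j \<in> F) \<and> (\<Oplus>j\<in>{..<length us}. x j \<otimes> us ! j) = \<zero>"
    for x
  obtain w l where w: "\<And>j. j < length us \<Longrightarrow> w j \<in> F" "l < length us" "w l \<noteq> \<zero>"
    and rel: "(\<Oplus>j\<in>{..<length us}. w j \<otimes> us ! j) = \<zero>"
    using dependent_imp_nontrivial_finsum[OF F(1) usC dep] by blast
  obtain z a where z: "P z" "a < length us" "z a = \<one>"
    and fixed: "\<And>h j. h \<in> ?H \<Longrightarrow> j < length us \<Longrightarrow> h (z j) = z j"
  proof (rule exists_invariant_normalized_solution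
      [where P = P and T = ?H and k = "length us" and w = w and l = l, OF F(1)])
    show "x j \<in> F" if "P x" "j < length us" for x j using that by (simp add: P_def)
    show "P (\<lambda>j. c \<otimes> x j)" if c: "c \<in> F" and x: "P x" for c x
      using finsum_smult_left[of "{..<length us}" c x "\<lambda>j. us ! j"] c x FC uC
        subringE(6)[OF subfieldE(1)[OF F(1)]] by (auto simp: P_def)
  next
    fix h x assume h: "h \<in> ?H" and x: "P x"
    have xF: "\<And>j. j < length us \<Longrightarrow> x j \<in> F" using x by (simp add: P_def)
    have hxF: "\<And>j. j < length us \<Longrightarrow> h (x j) \<in> F" using F_stable[OF h] xF by blast
    have "(\<Oplus>j\<in>{..<length us}. h (x j) \<otimes> us ! j) = \<zero>"
      using Gal_apply_relation[OF M h us LM] xF FM x by (auto simp: P_def)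
    then have "(\<Oplus>j\<in>{..<length us}. (x j \<ominus> h (x j)) \<otimes> us ! j) = \<zero>"
      using finsum_diff_mult[of "{..<length us}" x "\<lambda>j. h (x j)" "\<lambda>j. us ! j"] x xF hxF FC uC
      by (simp add: P_def)
    then show "P (\<lambda>j. x j \<ominus> h (x j))"
      using xF hxF subringE(5,7)[OF subfieldE(1)[OF F(1)]] by (auto simp: P_def a_minus_def)
  next
    fix h assume "h \<in> ?H"
    then have hR: "h \<in> ring_hom (R\<lparr>carrier := M\<rparr>) R" using Gal_ring_hom[OF M] HG by blast
    show "h \<zero> = \<zero>" "h \<one> = \<one>" using subfield_homE(4,5)[OF M hR] by simp_all
    show "h x \<in> carrier R" if "x \<in> F" for x using F_stable[OF \<open>h \<in> ?H\<close> that] FC by blast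
  next
    show "P w" using w(1) rel by (simp add: P_def)
    show "l < length us" "w l \<noteq> \<zero>" by (fact w(2,3))+
  next
    fix z a assume "P z" "a < length us" "z a = \<one>" "\<And>h j. h \<in> ?H \<Longrightarrow> j < length us \<Longrightarrow> h (z j) = z j"
    then show thesis by (rule that)
  qed
  have fixL: "fixed_field M ?H = L"
    using fixed_field_Gal_eq[OF L galois_intermediate[OF K gal L KL LM]] .
  have zK: "z j \<in> K" if j: "j < length us" for j
  proof -
    have zF: "z j \<in> F" using z(1) j by (simp add: P_def)
    then have "z j \<in> fixed_field M ?H" using fixed[OF _ j] FM by (auto simp: fixed_field_def)
    then show ?thesis using fixL zF LF by blast
  qed
  have "z a = \<zero>"
    using independent_finsum_eq_zero_imp[where x = z, OF K ind zK _ z(2)] z(1) by (simp add: P_def)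
  then show False using z(3) by simp
qed

end

section \<open>Strong cluster magnification\<close>

context field
begin

lemma dim_le_if_lin_disjoint:
  assumes K: "subfield K R" and F: "subfield F R" and TM: "T \<subseteq> M"
    and fdT: "finite_dimension K T" and fdM: "finite_dimension F M" and ld: "lin_disjoint R K T F"
  shows "(dim over K) T \<le> (dim over F) M"
proof -
  obtain us where us: "set us \<subseteq> carrier R" "independent K us" "length us = (dim over K) T" "Span K us = T"
    using exists_base[OF K finite_dimensionE[OF K fdT]] by blast
  have usT: "set us \<subseteq> T" using Span_base_incl[OF K us(1)] us(4) by simp
  then have "independent F us" using ld us(2) by (simp add: lin_disjoint_def)
  then show ?thesis
    using independent_length_le_dimension[OF F finite_dimensionE[OF F fdM]] usT TM us(3) by fastforce
qed

lemma card_Gal_le_dim_if_compositum: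
  assumes K: "subfield K R" and M: "subfield M R" and L: "subfield L R"
    and KL: "K \<subseteq> L" and LM: "L \<subseteq> M" and KF: "K \<subseteq> F" and FM: "F \<subseteq> M"
    and LF: "generate_field R (L \<union> F) = M" and fdL: "finite_dimension K L"
  shows "card (carrier (Gal R F M)) \<le> (dim over K) L"
proof -
  have KM: "K \<subseteq> M" using KL LM by blast
  interpret G: group "Gal R K M" using Gal_group[OF M KM] .
  have inj: "inj_on (\<lambda>s. restrict s L) (carrier (Gal R F M))"
  proof (rule inj_onI)
    fix s t assume s: "s \<in> carrier (Gal R F M)" and t: "t \<in> carrier (Gal R F M)"
      and eq: "restrict s L = restrict t L"
    have sG: "s \<in> carrier (Gal R K M)" and tG: "t \<in> carrier (Gal R K M)"
      using s t Gal_antimono[OF KF] by auto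
    have "inv\<^bsub>Gal R K M\<^esub> s \<otimes>\<^bsub>Gal R K M\<^esub> t \<in> carrier (Gal R L M)"
      using Gal_restrict_eq_iff[OF M KL LM sG tG] eq by simp
    moreover have "inv\<^bsub>Gal R K M\<^esub> s \<otimes>\<^bsub>Gal R K M\<^esub> t \<in> carrier (Gal R F M)"
      using Gal_intermediate_subgroup[OF M KF FM] s t by (meson subgroup.m_closed subgroup.m_inv_closed)
    ultimately have "inv\<^bsub>Gal R K M\<^esub> s \<otimes>\<^bsub>Gal R K M\<^esub> t = \<one>\<^bsub>Gal R K M\<^esub>"
      using Gal_compositum_inter[OF K M KL LM KF FM LF] by blast
    moreover have "t = s \<otimes>\<^bsub>Gal R K M\<^esub> (inv\<^bsub>Gal R K M\<^esub> s \<otimes>\<^bsub>Gal R K M\<^esub> t)"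
      using sG tG by (simp add: G.m_assoc[symmetric])
    ultimately show "s = t" using sG by simp
  qed
  have "card ((\<lambda>s. restrict s L) ` carrier (Gal R F M)) \<le> (dim over K) L"
  proof (rule card_embeddings_le_dim(2)[OF K L KL finite_dimensionE[OF K fdL]])
    show "embedding_over R K L t" if "t \<in> (\<lambda>s. restrict s L) ` carrier (Gal R F M)" for t
      using that embedding_over_restrict[OF M L LM KL Gal_embedding[OF M]] Gal_antimono[OF KF] by blast
    show "inj_on (\<lambda>s. restrict s L) ((\<lambda>s. restrict s L) ` carrier (Gal R F M))"
      by (rule inj_onI) auto
  qed
  then show ?thesis using card_image[OF inj] by simp
qed

lemma magnification_galois:
  assumes K: "subfield K R" and gal: "galois R K M"
    and sc: "strong_cluster_magnification_via R K L M F"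
  shows "galois R K L" and "(dim over F) M = (dim over K) L"
proof -
  have L: "subfield L R" and KL: "K \<subseteq> L" and fdL: "finite_dimension K L" and LM: "L \<subseteq> M"
    and galF: "galois R K F" and ld: "lin_disjoint R K (galois_closure R K L) F"
    and LF: "generate_field R (L \<union> F) = M"
    using sc by (auto simp: strong_cluster_magnification_via_def finite_ext_def compositum_def)
  note M = galoisD(1)[OF gal] and F = galoisD(1,2)[OF galF]
  have FM: "F \<subseteq> M"
    using generate_fieldE(2)[of "L \<union> F"] subfieldE(3)[OF L] subfieldE(3)[OF F(1)] LF by auto
  define T where "T = galois_closure R K L"
  note T = galois_closure_galois[OF K gal LM L KL, folded T_def]
  note dimsF = finite_dimension_tower[OF K F(1) M F(2) FM galoisD(3)[OF gal]]
  note dimsT = finite_dimension_tower[OF K L galoisD(1)[OF T(3)] KL T(1) galoisD(3)[OF T(3)]]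
  have "(dim over K) T \<le> (dim over F) M"
    using dim_le_if_lin_disjoint[OF K F(1) T(2) galoisD(3)[OF T(3)] dimsF(2)] ld by (simp add: T_def)
  moreover have "(dim over F) M \<le> (dim over K) L"
    using card_Gal_le_dim_if_compositum[OF K M L KL LM F(2) FM LF fdL]
      galois_card_Gal_intermediate(1)[OF K gal F(1) F(2) FM] by simp
  ultimately have le: "(dim over K) L * (dim over L) T \<le> (dim over K) L" using dimsT(3) by linarith
  have "(dim over L) T \<le> 1"
  proof (rule ccontr)
    assume "\<not> (dim over L) T \<le> 1"
    then have "(dim over K) L * 2 \<le> (dim over K) L * (dim over L) T" by (intro mult_le_mono2) simp
    then show False using le dim_pos[OF K L fdL] by simp
  qed
  then have "(dim over L) T = 1" using dim_pos[OF L galoisD(1)[OF T(3)] dimsT(2)] by simp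
  then have TL: "T = L" using dim_eq_one_imp_eq[OF L galoisD(1)[OF T(3)] T(1) dimsT(2)] by simp
  then show "galois R K L" using T(3) by simp
  show "(dim over F) M = (dim over K) L"
    using \<open>(dim over K) T \<le> (dim over F) M\<close> \<open>(dim over F) M \<le> (dim over K) L\<close> TL by simp
qed

lemma magnification_imp_Gal_direct_product:
  assumes K: "subfield K R" and gal: "galois R K M"
    and sc: "strong_cluster_magnification_via R K L M F" and FK: "F \<noteq> K"
  obtains A B :: "nat monoid" where "group A" and "group B"
    and "carrier A \<noteq> {\<one>\<^bsub>A\<^esub>}" and "carrier B \<noteq> {\<one>\<^bsub>B\<^esub>}" and "order A > 2"
    and "Gal R K M \<cong> A \<times>\<times> B"
proof -
  have deg: "(dim over K) L > 2" and galF: "galois R K F" and LF: "generate_field R (L \<union> F) = M"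
    using sc by (auto simp: strong_cluster_magnification_via_def degree_ext_def over_def compositum_def)
  note galL = magnification_galois(1)[OF K gal sc]
  note M = galoisD(1,2)[OF gal] and L = galoisD(1,2)[OF galL] and F = galoisD(1,2)[OF galF]
  have LM: "L \<subseteq> M" and FM: "F \<subseteq> M"
    using LF generate_fieldE(2)[of "L \<union> F"] subfieldE(3)[OF L(1)] subfieldE(3)[OF F(1)] by auto
  interpret G: group "Gal R K M" using Gal_group[OF M] .
  have "carrier (Gal R L M) \<lhd> Gal R K M" and "carrier (Gal R F M) \<lhd> Gal R K M"
    using Gal_stable_imp_normal[OF M(1) L(2) LM] Gal_stable_imp_normal[OF M(1) F(2) FM]
      Gal_maps_into_galois_subfield[OF K M galL] Gal_maps_into_galois_subfield[OF K M galF] LM FM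
    by blast+
  moreover have "carrier (Gal R F M) \<inter> carrier (Gal R L M) \<subseteq> {\<one>\<^bsub>Gal R K M\<^esub>}"
    using Gal_compositum_inter[OF K M(1) L(2) LM F(2) FM LF] by blast
  moreover note dimsL = finite_dimension_tower[OF K L(1) M(1) L(2) LM galoisD(3)[OF gal]]
  moreover note dimsF = finite_dimension_tower[OF K F(1) M(1) F(2) FM galoisD(3)[OF gal]]
  moreover note cards = galois_card_Gal_intermediate(1)[OF K gal L(1) L(2) LM]
    galois_card_Gal_intermediate(1)[OF K gal F(1) F(2) FM]
  moreover note FML = magnification_galois(2)[OF K gal sc]
  ultimately obtain A B :: "nat monoid" where AB: "group A" "group B"
    "order A = (dim over F) M" "order B = (dim over L) M" "Gal R K M \<cong> A \<times>\<times> B"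
    using internal_direct_product_iso[OF G.is_group finite_Gal[OF K gal]] galoisD(4)[OF gal]
    by (metis mult.commute)
  have "(dim over K) L * (dim over L) M = (dim over K) L * (dim over K) F"
    using dimsL(3) dimsF(3) FML by (auto simp: mult.commute)
  then have "(dim over L) M = (dim over K) F" using deg by simp
  moreover have "(dim over K) F \<noteq> 1" using dim_eq_one_imp_eq[OF K F(1) F(2) dimsF(1)] FK by blast
  ultimately have "order B \<ge> 2" using AB(4) dim_pos[OF K F(1) dimsF(1)] by simp
  moreover have "order A > 2" using AB(3) FML deg by simp
  ultimately have "carrier A \<noteq> {\<one>\<^bsub>A\<^esub>}" and "carrier B \<noteq> {\<one>\<^bsub>B\<^esub>}" by (auto simp: order_def)
  then show ?thesis using that AB \<open>order A > 2\<close> by blast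
qed

lemma compositum_eq_if_Gal_inter_trivial:
  assumes K: "subfield K R" and gal: "galois R K M"
    and L: "subfield L R" and KL: "K \<subseteq> L" and LM: "L \<subseteq> M"
    and F: "subfield F R" and KF: "K \<subseteq> F" and FM: "F \<subseteq> M"
    and trivial: "carrier (Gal R L M) \<inter> carrier (Gal R F M) \<subseteq> {\<one>\<^bsub>Gal R K M\<^esub>}"
  shows "generate_field R (L \<union> F) = M"
proof -
  note M = galoisD(1)[OF gal]
  define C where "C = generate_field R (L \<union> F)"
  have LFC: "L \<union> F \<subseteq> carrier R" using subfieldE(3)[OF L] subfieldE(3)[OF F] by blast
  have C: "subfield C R" using generate_field_is_subfield[OF LFC] by (simp add: C_def)
  have LF_C: "L \<union> F \<subseteq> C" using generate_fieldE(2)[OF LFC] by (simp add: C_def)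
  have CM: "C \<subseteq> M" using generate_field_min_subfield1[OF LFC M] LM FM by (simp add: C_def)
  have KC: "K \<subseteq> C" using KL LF_C by blast
  note dims = finite_dimension_tower[OF K C M KC CM galoisD(3)[OF gal]]
  have "carrier (Gal R C M) \<subseteq> carrier (Gal R L M) \<inter> carrier (Gal R F M)"
    using LF_C by (auto simp: carrier_Gal)
  then have "carrier (Gal R C M) \<subseteq> {\<one>\<^bsub>Gal R K M\<^esub>}" using trivial by blast
  then have "card (carrier (Gal R C M)) \<le> 1" using card_mono[of "{\<one>\<^bsub>Gal R K M\<^esub>}"] by simp
  then have "(dim over C) M = 1"
    using galois_card_Gal_intermediate(1)[OF K gal C KC CM] dim_pos[OF C M dims(2)] by simp
  then show ?thesis using dim_eq_one_imp_eq[OF C M CM dims(2)] by (simp add: C_def)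
qed

lemma inter_subset_if_Gal_factorizes:
  assumes K: "subfield K R" and gal: "galois R K M" and LM: "L \<subseteq> M"
    and factor: "\<And>s. s \<in> carrier (Gal R K M) \<Longrightarrow>
      \<exists>a\<in>carrier (Gal R F M). \<exists>b\<in>carrier (Gal R L M). s = a \<otimes>\<^bsub>Gal R K M\<^esub> b"
    and KL: "K \<subseteq> L" and KF: "K \<subseteq> F"
  shows "L \<inter> F \<subseteq> K"
proof
  fix x assume x: "x \<in> L \<inter> F"
  have "s x = x" if s: "s \<in> carrier (Gal R K M)" for s
  proof -
    obtain a b where a: "a \<in> carrier (Gal R F M)" and b: "b \<in> carrier (Gal R L M)"
      and sab: "s = a \<otimes>\<^bsub>Gal R K M\<^esub> b" using factor[OF s] by blast
    have aG: "a \<in> carrier (Gal R K M)" and bG: "b \<in> carrier (Gal R K M)"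
      using a b Gal_antimono[OF KF, of R M] Gal_antimono[OF KL, of R M] by auto
    have "x \<in> M" using x LM by blast
    then have "s x = a (b x)" unfolding sab by (rule Gal_apply_mult[OF aG bG])
    also have "\<dots> = x" using a b x by (auto simp: carrier_Gal)
    finally show ?thesis .
  qed
  then have "x \<in> fixed_field M (carrier (Gal R K M))" using x LM by (auto simp: fixed_field_def)
  then show "x \<in> K" using fixed_field_Gal_eq[OF K gal] by simp
qed

lemma Gal_direct_product_imp_magnification:
  fixes A B :: "nat monoid"
  assumes K: "subfield K R" and gal: "galois R K M"
    and A: "group A" and B: "group B" and nB: "carrier B \<noteq> {\<one>\<^bsub>B\<^esub>}" and oA: "order A > 2"
    and iso: "Gal R K M \<cong> A \<times>\<times> B"
  obtains L where "nontrivial_strong_cluster_magnification R K L M"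
proof -
  note M = galoisD(1,2)[OF gal]
  interpret G: group "Gal R K M" using Gal_group[OF M] .
  obtain phi where phi: "phi \<in> iso (Gal R K M) (A \<times>\<times> B)" using iso by (auto simp: is_iso_def)
  define N\<^sub>A where "N\<^sub>A = kernel (Gal R K M) B (snd \<circ> phi)"
  define N\<^sub>B where "N\<^sub>B = kernel (Gal R K M) A (fst \<circ> phi)"
  note N = DirProd_iso_kernels[OF G.is_group A B phi, folded N\<^sub>A_def N\<^sub>B_def]
  define L where "L = fixed_field M N\<^sub>B"
  define F where "F = fixed_field M N\<^sub>A"
  have NA: "subgroup N\<^sub>A (Gal R K M)" and NB: "subgroup N\<^sub>B (Gal R K M)"
    using N(1,2) by (simp_all add: normal_def)
  note L = fixed_field_subfield[OF M(1) K M(2) subgroup.subset[OF NB], folded L_def]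
  note F = fixed_field_subfield[OF M(1) K M(2) subgroup.subset[OF NA], folded F_def]
  have GalL: "carrier (Gal R L M) = N\<^sub>B" and dimL: "(dim over L) M = card (carrier B)"
    using Gal_fixed_field[OF K gal NB] N(4) by (simp_all add: L_def)
  have GalF: "carrier (Gal R F M) = N\<^sub>A" and dimF: "(dim over F) M = card (carrier A)"
    using Gal_fixed_field[OF K gal NA] N(3) by (simp_all add: F_def)
  have galL: "galois R K L" and galF: "galois R K F"
    using galois_if_Gal_stable[OF K gal L(1,2,3)] galois_if_Gal_stable[OF K gal F(1,2,3)]
      fixed_field_normal_stable[OF M N(2)] fixed_field_normal_stable[OF M N(1)]
    by (auto simp: L_def F_def)
  note dimsL = finite_dimension_tower[OF K L(1) M(1) L(2,3) galoisD(3)[OF gal]]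
  note dimsF = finite_dimension_tower[OF K F(1) M(1) F(2,3) galoisD(3)[OF gal]]
  have dimM: "(dim over K) M = card (carrier A) * card (carrier B)"
    using galoisD(4)[OF gal] iso_same_card[OF iso] by (simp add: card_cartesian_product)
  then have "(dim over K) L = card (carrier A)" and "(dim over K) F = card (carrier B)"
    using dimsL(3) dimsF(3) dimL dimF dim_pos[OF K M(1) galoisD(3)[OF gal]] by auto
  moreover have "card (carrier B) \<noteq> 1"
    using nB monoid.one_closed[OF group.is_monoid[OF B]] by (metis card_1_singletonE singletonD)
  moreover have "(dim over K) K = 1" using dimI[OF K dimension_one[OF K]] .
  ultimately have degL: "(dim over K) L > 2" and FK: "F \<noteq> K"
    using oA by (auto simp: order_def)
  have "L \<inter> F \<subseteq> K"
    using inter_subset_if_Gal_factorizes[OF K gal L(3) _ L(2) F(2)] N(6) GalL GalF by blast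
  then have "lin_disjoint R K (galois_closure R K L) F"
    using lin_disjoint_if_galois[OF K gal L(1,2,3) galF F(3)] galois_closure_eq[OF galL] by simp
  moreover have "generate_field R (L \<union> F) = M"
    using compositum_eq_if_Gal_inter_trivial[OF K gal L(1,2,3) F(1,2,3)] N(5) GalL GalF by blast
  ultimately have "strong_cluster_magnification_via R K L M F"
    using galoisD(3)[OF galL] L degL galF
    by (simp add: strong_cluster_magnification_via_def finite_ext_def degree_ext_def over_def compositum_def)
  then show ?thesis using that FK by (auto simp: nontrivial_strong_cluster_magnification_def)
qed

end

theorem corollary4p8:
  fixes R :: "'a ring" and K M :: "'a set"
  assumes "algebraic_closure R K"
    and "perfect_subfield R K"
    and "galois R K M"
  shows "((\<exists>L. nontrivial_strong_cluster_magnification R K L M) \<longleftrightarrow>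
           (\<exists>(A :: nat monoid) (B :: nat monoid). group A \<and> group B \<and>
              carrier A \<noteq> {\<one>\<^bsub>A\<^esub>} \<and> carrier B \<noteq> {\<one>\<^bsub>B\<^esub>} \<and> order A > 2 \<and>
              Gal R K M \<cong> A \<times>\<times> B))
         \<and> (\<forall>L. nontrivial_strong_cluster_magnification R K L M \<longrightarrow> galois R K L)"
proof -
  interpret field R using assms(1) by (simp add: algebraic_closure_def)
  have K: "subfield K R" using assms(1) by (simp add: algebraic_closure_def)
  have magnification: "\<exists>F. strong_cluster_magnification_via R K L M F \<and> F \<noteq> K"
    if "nontrivial_strong_cluster_magnification R K L M" for L
    using that by (simp add: nontrivial_strong_cluster_magnification_def)
  show ?thesis
    using magnification_imp_Gal_direct_product[OF K assms(3)]
      Gal_direct_product_imp_magnification[OF K assms(3)]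
      magnification_galois(1)[OF K assms(3)] magnification
    by metis
qed

end
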